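(* Let $0<s<\tfrac12$, and let $$\gamma_1(s)=\frac{1}{2}\left(\frac{2^{1-2s}-1}{1-2^{-2s}}\right),\qquad \gamma_2(s)=\frac{2-2^{-2s}}{1-2^{-2s}}.$$ Then: (1) $E^\delta_s(h,\tilde h)=0$ for all $h\neq\tilde h$ in $\mathcal{H}$. (2) $Q^\delta_s(h,\tilde h)=0$ for all $h\neq\tilde h$ in $\mathcal{H}$. (3) $\mathcal{E}^\delta_s(\varphi)=\gamma_2(s)\sum_{h\in\mathcal{H}}\frac{|\langle\varphi,h\rangle|^2}{|I(h)|^{2s}}$ for every $\varphi\in\mathcal{S}(\mathcal{H})$. (4) $\mathcal{Q}^\delta_s(\varphi)=\gamma_1(s)\sum_{h\in\mathcal{H}}|I(h)|^{2s}|\langle\varphi,h\rangle|^2$ for every $\varphi\in\mathcal{S}(\mathcal{H})$.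
   Context: Let $\mathbb{R}^+=(0,\infty)$. Dyadic intervals. $\mathcal{D}$ is the family of dyadic intervals $I^j_k=(k2^{-j},(k+1)2^{-j}]$ with $j\in\mathbb{Z}$ and $k$ a nonnegative integer. Dyadic distance. $\delta(x,y)=\inf\{|I|:I\in\mathcal{D},\ x,y\in I\}$ for $x,y\in\mathbb{R}^+$. Haar system. $\mathcal{H}$ consists of the functions $h_I(x)=2^{j/2}h(2^jx-k)$ for $I=I^j_k\in\mathcal{D}$, where $h=\chi_{(0,1/2]}-\chi_{(1/2,1]}$. For $h=h_I$ write $I(h)=I$. $\mathcal{H}$ is an orthonormal basis of $L^2(\mathbb{R}^+)$, and $\langle\cdot,\cdot\rangle$ is its inner product. $\mathcal{S}(\mathcal{H})$ is the set of finite linear combinations of elements of $\mathcal{H}$. Bilinear forms: $$E^\delta_s(\varphi,\psi)=\iint_{(\mathbb{R}^+)^2}\frac{[\varphi(x)-\varphi(y)][\overline{\psi}(x)-\overline{\psi}(y)]}{\delta(x,y)^{2s}}\,\frac{dx\,dy}{\delta(x,y)},$$ $$Q^\delta_s(\varphi,\psi)=\iint_{(\mathbb{R}^+)^2}\delta(x,y)^{2s}\varphi(x)\overline{\psi}(y)\,\frac{dx\,dy}{\delta(x,y)}.$$ Quadratic forms: $\mathcal{E}^\delta_s(\varphi)=E^\delta_s(\varphi,\varphi)$ and $\mathcal{Q}^\delta_s(\varphi)=Q^\delta_s(\varphi,\varphi)$. *)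

theory Defs
  imports "HOL-Analysis.Analysis"
begin

definition dyad :: "int \<Rightarrow> nat \<Rightarrow> real set" where
  "dyad j k = {real k * 2 powr (- real_of_int j) <.. (real k + 1) * 2 powr (- real_of_int j)}"

definition dlen :: "int \<Rightarrow> real" where
  "dlen j = 2 powr (- real_of_int j)"

definition ddist :: "real \<Rightarrow> real \<Rightarrow> real" where
  "ddist x y = Inf {dlen j | j k. x \<in> dyad j k \<and> y \<in> dyad j k}"

definition hmother :: "real \<Rightarrow> real" where
  "hmother t = indicator {0<..1/2} t - indicator {1/2<..1} t"

definition haar :: "int \<Rightarrow> nat \<Rightarrow> real \<Rightarrow> complex" where
  "haar j k x = complex_of_real (2 powr (real_of_int j / 2) * hmother (2 powr real_of_int j * x - real k))"

definition ipR :: "(real \<Rightarrow> complex) \<Rightarrow> (real \<Rightarrow> complex) \<Rightarrow> complex" where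
  "ipR \<phi> \<psi> = (LINT x:{0<..}|lborel. \<phi> x * cnj (\<psi> x))"

definition SH :: "(real \<Rightarrow> complex) set" where
  "SH = {\<phi>. \<exists>F c. finite F \<and> \<phi> = (\<lambda>x. \<Sum>(j,k)\<in>F. c (j,k) * haar j k x)}"

definition Eform :: "real \<Rightarrow> (real \<Rightarrow> complex) \<Rightarrow> (real \<Rightarrow> complex) \<Rightarrow> complex" where
  "Eform s \<phi> \<psi> = (LINT z:({0<..} \<times> {0<..})|lborel.
     ((\<phi> (fst z) - \<phi> (snd z)) * (cnj (\<psi> (fst z)) - cnj (\<psi> (snd z))))
       / complex_of_real (ddist (fst z) (snd z) powr (2 * s))
       / complex_of_real (ddist (fst z) (snd z)))"

definition Qform :: "real \<Rightarrow> (real \<Rightarrow> complex) \<Rightarrow> (real \<Rightarrow> complex) \<Rightarrow> complex" where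
  "Qform s \<phi> \<psi> = (LINT z:({0<..} \<times> {0<..})|lborel.
     complex_of_real (ddist (fst z) (snd z) powr (2 * s)) * \<phi> (fst z) * cnj (\<psi> (snd z))
       / complex_of_real (ddist (fst z) (snd z)))"

definition gamma1 :: "real \<Rightarrow> real" where
  "gamma1 s = (1/2) * ((2 powr (1 - 2 * s) - 1) / (1 - 2 powr (- 2 * s)))"

definition gamma2 :: "real \<Rightarrow> real" where
  "gamma2 s = (2 - 2 powr (- 2 * s)) / (1 - 2 powr (- 2 * s))"

end

theory Submission
  imports Defs
begin

text \<open>Let \<open>S\<^sub>j\<close> be the set of pairs of positive reals lying in a common dyadic interval of length
  \<open>2\<^sup>-\<^sup>j\<close>. The sets \<open>S\<^sub>j\<close> decrease in \<open>j\<close>, and off the diagonal the dyadic distance equals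
  \<open>2\<^sup>-\<^sup>j\<close> exactly on the shell \<open>S\<^sub>j - S\<^sub>j\<^sub>+\<^sub>1\<close>. So the integral of \<open>G(x,y) \<Phi>(\<delta>(x,y))\<close> is the
  layer sum \<open>\<Sum>\<^sub>j \<Phi>(2\<^sup>-\<^sup>j) (\<integral>\<^bsub>S\<^sub>j\<^esub> G - \<integral>\<^bsub>S\<^sub>j\<^sub>+\<^sub>1\<^esub> G)\<close>, by monotone and dominated convergence.
  For Haar functions, Fubini gives \<open>\<integral>\<^bsub>S\<^sub>j\<^esub> h\<^sub>I(x) h\<^sub>J(x) = 2\<^sup>-\<^sup>j \<delta>\<^sub>I\<^sub>J\<close>, and \<open>\<integral>\<^bsub>S\<^sub>j\<^esub> h\<^sub>I(x) h\<^sub>J(y)\<close>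
  is \<open>2\<^sup>-\<^sup>j \<delta>\<^sub>I\<^sub>J\<close> when \<open>|I| > 2\<^sup>-\<^sup>j\<close> (then \<open>h\<^sub>I\<close> is constant on level-\<open>j\<close> intervals) and \<open>0\<close> otherwise
  (then \<open>h\<^sub>I\<close> has mean zero on them). The layer sums for a pair of Haar functions therefore vanish
  unless the pair is diagonal, in which case they are geometric series in \<open>2\<^sup>-\<^sup>2\<^sup>s\<close> summing to
  \<open>\<gamma>\<^sub>2(s) |I|\<^sup>-\<^sup>2\<^sup>s\<close> and \<open>\<gamma>\<^sub>1(s) |I|\<^sup>2\<^sup>s\<close>. Expanding a finite Haar combination bilinearly then gives the
  diagonal formulas.\<close>

section \<open>Dyadic intervals\<close>

definition dyad_index :: "int \<Rightarrow> real \<Rightarrow> nat" where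
  "dyad_index j x = nat (\<lceil>2 powr real_of_int j * x\<rceil> - 1)"

lemma two_powr_int_Suc: "(2::real) powr real_of_int (j + 1) = 2 * 2 powr real_of_int j"
  by (simp add: powr_add)

lemma two_powr_neg_int_Suc: "(2::real) powr (- real_of_int (j + 1)) = 2 powr (- real_of_int j) / 2"
  by (simp add: powr_diff)

lemma dyad_iff:
  "x \<in> dyad j k \<longleftrightarrow> real k < 2 powr real_of_int j * x \<and> 2 powr real_of_int j * x \<le> real k + 1"
proof -
  define p where "p = (2::real) powr real_of_int j"
  have p: "p > 0" by (simp add: p_def)
  have "2 powr (- real_of_int j) = 1 / p" by (simp add: powr_minus_divide p_def)
  then have "x \<in> dyad j k \<longleftrightarrow> real k / p < x \<and> x \<le> (real k + 1) / p"
    unfolding dyad_def by simp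
  also have "\<dots> \<longleftrightarrow> real k < x * p \<and> x * p \<le> real k + 1"
    using p by (simp only: pos_divide_less_eq pos_le_divide_eq)
  finally show ?thesis by (simp add: p_def mult.commute)
qed

lemma mem_dyad: "x \<in> dyad j k \<longleftrightarrow> 0 < x \<and> dyad_index j x = k"
proof -
  let ?p = "(2::real) powr real_of_int j"
  have "x \<in> dyad j k \<longleftrightarrow> \<lceil>?p * x\<rceil> = int k + 1"
    unfolding dyad_iff by (simp add: ceiling_eq_iff)
  also have "\<dots> \<longleftrightarrow> 0 < ?p * x \<and> dyad_index j x = k"
  proof
    assume "\<lceil>?p * x\<rceil> = int k + 1"
    moreover from this have "0 < ?p * x"
      by (metis ceiling_le_zero not_le of_nat_0_le_iff zero_less_one add_nonneg_pos le_less_trans less_le)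
    ultimately show "0 < ?p * x \<and> dyad_index j x = k" by (simp add: dyad_index_def)
  next
    assume "0 < ?p * x \<and> dyad_index j x = k"
    moreover from this have "\<lceil>?p * x\<rceil> \<ge> 1" by (simp add: one_le_ceiling)
    ultimately show "\<lceil>?p * x\<rceil> = int k + 1" by (auto simp: dyad_index_def)
  qed
  also have "0 < ?p * x \<longleftrightarrow> 0 < x" by (simp add: zero_less_mult_iff)
  finally show ?thesis .
qed

lemma dyad_Suc_subset: "dyad (j + 1) m \<subseteq> dyad j (m div 2)"
proof
  fix x assume "x \<in> dyad (j + 1) m"
  then have "real m < 2 * (2 powr real_of_int j * x)" "2 * (2 powr real_of_int j * x) \<le> real m + 1"
    unfolding dyad_iff two_powr_int_Suc by (simp_all add: mult.assoc)
  moreover have "2 * (m div 2) \<le> m" "m + 1 \<le> 2 * (m div 2 + 1)"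
    by presburger+
  then have "real (2 * (m div 2)) \<le> real m" "real (m + 1) \<le> real (2 * (m div 2 + 1))"
    by (simp_all only: of_nat_le_iff)
  then have "2 * real (m div 2) \<le> real m" "real m + 1 \<le> 2 * (real (m div 2) + 1)"
    by simp_all
  ultimately show "x \<in> dyad j (m div 2)"
    unfolding dyad_iff by linarith
qed

lemma dyad_subset:
  assumes "a \<le> b"
  shows "dyad b m \<subseteq> dyad a (m div 2 ^ nat (b - a))"
proof -
  have "dyad (a + int d) m \<subseteq> dyad a (m div 2 ^ d)" for d
  proof (induction d arbitrary: m)
    case (Suc d)
    have "dyad (a + int (Suc d)) m \<subseteq> dyad (a + int d) (m div 2)"
      using dyad_Suc_subset[of "a + int d" m] by (simp add: algebra_simps)
    also have "\<dots> \<subseteq> dyad a (m div 2 div 2 ^ d)" by (rule Suc.IH)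
    finally show ?case by (simp add: div_mult2_eq mult.commute)
  qed simp
  from this[of "nat (b - a)"] assms show ?thesis by simp
qed

lemma dyad_index_mono:
  assumes "a \<le> b" "0 < x"
  shows "dyad_index a x = dyad_index b x div 2 ^ nat (b - a)"
proof -
  have "x \<in> dyad b (dyad_index b x)" using assms by (simp add: mem_dyad)
  then have "x \<in> dyad a (dyad_index b x div 2 ^ nat (b - a))" using dyad_subset[OF assms(1)] by blast
  then show ?thesis by (simp add: mem_dyad)
qed

lemma dyad_Int:
  assumes "a \<le> b"
  shows "dyad a m \<inter> dyad b n = (if n div 2 ^ nat (b - a) = m then dyad b n else {})"
  using dyad_subset[OF assms, of n] dyad_index_mono[OF assms] by (auto simp: mem_dyad)

lemma sets_dyad [measurable]: "dyad j k \<in> sets borel"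
  unfolding dyad_def by simp

lemma emeasure_dyad: "emeasure lborel (dyad j k) = 2 powr (- real_of_int j)"
  unfolding dyad_def by (simp add: distrib_right)

lemma measure_dyad: "measure lborel (dyad j k) = 2 powr (- real_of_int j)"
  unfolding measure_def emeasure_dyad by simp

lemma measure_dyad_Int:
  assumes "a \<le> b"
  shows "measure lborel (dyad a m \<inter> dyad b n) =
    (if n div 2 ^ nat (b - a) = m then 2 powr (- real_of_int b) else 0)"
  unfolding dyad_Int[OF assms] by (simp add: measure_dyad)

lemma integrable_indicator_dyad_Int:
  "integrable lborel (indicator (dyad a m \<inter> dyad b n) :: real \<Rightarrow> real)"
proof (rule integrable_real_indicator)
  have "emeasure lborel (dyad a m \<inter> dyad b n) \<le> emeasure lborel (dyad a m)"
    by (intro emeasure_mono) auto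
  then show "emeasure lborel (dyad a m \<inter> dyad b n) < \<infinity>"
    unfolding emeasure_dyad by (simp add: le_less_trans)
qed simp

lemma dyad_diameter: "x \<in> dyad j k \<Longrightarrow> y \<in> dyad j k \<Longrightarrow> \<bar>x - y\<bar> < 2 powr (- real_of_int j)"
  unfolding dyad_def by (auto simp: distrib_right)

lemma dyad_top: "dyad (- N) 0 = {0<..2 powr real_of_int N}"
  unfolding dyad_def by simp

lemma dyad_top_mono: "N \<le> N' \<Longrightarrow> dyad (- N) 0 \<subseteq> dyad (- N') 0"
proof -
  assume "N \<le> N'"
  then have le: "(2::real) powr real_of_int N \<le> 2 powr real_of_int N'" by simp
  show ?thesis unfolding dyad_top using order_trans[OF _ le] by (simp add: subset_eq)
qed

lemma ex_dyad_top: "\<exists>N. dyad j k \<subseteq> dyad (- N) 0 \<and> - N \<le> j"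
proof -
  have "dyad j k \<subseteq> dyad (- (int k - j)) 0"
    using dyad_subset[of "- (int k - j)" j k] by simp
  moreover have "- (int k - j) \<le> j" by simp
  ultimately show ?thesis by blast
qed

section \<open>Pairs in a common dyadic interval and the dyadic distance\<close>

definition dyad_pairs :: "int \<Rightarrow> (real \<times> real) set" where
  "dyad_pairs j = {z. 0 < fst z \<and> 0 < snd z \<and> dyad_index j (fst z) = dyad_index j (snd z)}"

lemma dyad_pairs_UN: "dyad_pairs j = (\<Union>k. dyad j k \<times> dyad j k)"
  by (auto simp: dyad_pairs_def mem_dyad)

lemma sets_dyad_pairs [measurable]: "dyad_pairs j \<in> sets borel"
  unfolding dyad_pairs_UN by (rule sets.countable_UN) (auto intro!: borel_Times)

lemma sets_dyad_pairs_pair [measurable]: "dyad_pairs j \<in> sets (borel \<Otimes>\<^sub>M borel)"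
  unfolding borel_prod by (rule sets_dyad_pairs)

lemma dyad_pairs_antimono: "a \<le> b \<Longrightarrow> dyad_pairs b \<subseteq> dyad_pairs a"
  by (auto simp: dyad_pairs_def dyad_index_mono[of a b])

lemma dyad_pairs_swap: "(x, y) \<in> dyad_pairs j \<longleftrightarrow> (y, x) \<in> dyad_pairs j"
  by (auto simp: dyad_pairs_def)

lemma dyad_pairs_diag: "z \<in> dyad_pairs j \<Longrightarrow> fst z = snd z \<Longrightarrow> z \<in> dyad_pairs j'"
  by (auto simp: dyad_pairs_def)

lemma ex_dyad_pairs:
  assumes "0 < x" "0 < y"
  shows "\<exists>j. (x, y) \<in> dyad_pairs j"
proof -
  obtain n where n: "max x y < 2 ^ n" using real_arch_pow[of "2::real" "max x y"] by auto
  then have "x \<in> dyad (- int n) 0" "y \<in> dyad (- int n) 0"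
    unfolding dyad_top using assms by (auto simp: powr_realpow)
  then have "(x, y) \<in> dyad_pairs (- int n)" by (simp add: dyad_pairs_def mem_dyad)
  then show ?thesis by blast
qed

lemma ex_not_dyad_pairs:
  assumes "x \<noteq> y"
  shows "\<exists>j. (x, y) \<notin> dyad_pairs j"
proof -
  obtain n where n: "(1/2::real) ^ n < \<bar>x - y\<bar>"
    using assms real_arch_pow_inv[of "\<bar>x - y\<bar>" "1/2::real"] by auto
  have "(2::real) powr (- real_of_int (int n)) = (1/2) ^ n"
    by (simp add: powr_minus powr_realpow power_one_over inverse_eq_divide)
  with n have "(x, y) \<notin> dyad_pairs (int n)"
    using dyad_diameter[of x "int n" "dyad_index (int n) x" y] by (auto simp: dyad_pairs_def mem_dyad)
  then show ?thesis by blast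
qed

lemma ex_dyad_pairs_level:
  assumes "0 < x" "0 < y" "x \<noteq> y"
  shows "\<exists>j. (x, y) \<in> dyad_pairs j \<and> (x, y) \<notin> dyad_pairs (j + 1)"
proof (rule ccontr)
  assume "\<not> ?thesis"
  then have step: "\<And>j. (x, y) \<in> dyad_pairs j \<Longrightarrow> (x, y) \<in> dyad_pairs (j + 1)" by blast
  obtain j0 where j0: "(x, y) \<in> dyad_pairs j0" using ex_dyad_pairs assms by blast
  obtain j1 where j1: "(x, y) \<notin> dyad_pairs j1" using ex_not_dyad_pairs assms by blast
  have "(x, y) \<in> dyad_pairs j" if "j0 \<le> j" for j
    using that by (induction j rule: int_ge_induct) (use j0 step in auto)
  then show False
    using j1 j0 dyad_pairs_antimono[of j1 j0] by (cases "j0 \<le> j1") auto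
qed

lemma ddist_eq_dyad_pairs_level:
  assumes "(x, y) \<in> dyad_pairs j" "(x, y) \<notin> dyad_pairs (j + 1)"
  shows "ddist x y = 2 powr (- real_of_int j)"
proof -
  have "0 < x" "0 < y" using assms by (auto simp: dyad_pairs_def)
  then have set_eq: "{dlen j | j k. x \<in> dyad j k \<and> y \<in> dyad j k} =
      {2 powr (- real_of_int i) | i. (x, y) \<in> dyad_pairs i}"
    by (auto simp: dyad_pairs_def mem_dyad dlen_def)
  have "i \<le> j" if "(x, y) \<in> dyad_pairs i" for i
    using that assms dyad_pairs_antimono[of "j + 1" i] by (cases "i \<le> j") auto
  then show ?thesis
    unfolding ddist_def set_eq by (intro cInf_eq_minimum) (use assms in auto)
qed

lemma ddist_self:
  assumes "0 < x"
  shows "ddist x x = 0"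
proof -
  let ?X = "{2 powr (- real_of_int j) | j::int. (x, x) \<in> dyad_pairs j}"
  have all: "(x, x) \<in> dyad_pairs j" for j using assms by (simp add: dyad_pairs_def)
  have set_eq: "{dlen j | j k. x \<in> dyad j k \<and> x \<in> dyad j k} = ?X"
    using assms by (auto simp: dyad_pairs_def mem_dyad dlen_def)
  have bdd: "bdd_below ?X" by (intro bdd_belowI[of _ 0]) auto
  have "Inf ?X \<le> (1/2) ^ n" for n
  proof (rule cInf_lower[OF _ bdd])
    have "(2::real) powr (- real_of_int (int n)) = (1/2) ^ n"
      by (simp add: powr_minus powr_realpow power_one_over inverse_eq_divide)
    then show "(1/2::real) ^ n \<in> ?X" using all by (metis (mono_tags, lifting) mem_Collect_eq)
  qed
  then have "Inf ?X \<le> 0"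
    using real_arch_pow_inv[of "Inf ?X" "1/2::real"] by (force simp: not_le[symmetric])
  moreover have "0 \<le> Inf ?X" by (intro cInf_greatest) (use all in auto)
  ultimately show ?thesis unfolding ddist_def set_eq by simp
qed

section \<open>Haar functions\<close>

definition haar_real :: "int \<Rightarrow> nat \<Rightarrow> real \<Rightarrow> real" where
  "haar_real j k x = 2 powr (real_of_int j / 2) *
     (indicator (dyad (j + 1) (2 * k)) x - indicator (dyad (j + 1) (2 * k + 1)) x)"

lemma haar_real_measurable [measurable]: "haar_real j k \<in> borel_measurable borel"
  unfolding haar_real_def by measurable

lemma haar_eq_haar_real: "haar j k x = complex_of_real (haar_real j k x)"
proof -
  define p where "p = (2::real) powr real_of_int j"
  have "x \<in> dyad (j + 1) (2 * k) \<longleftrightarrow> p * x - real k \<in> {0<..1/2}"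
       "x \<in> dyad (j + 1) (2 * k + 1) \<longleftrightarrow> p * x - real k \<in> {1/2<..1}"
    unfolding dyad_iff two_powr_int_Suc p_def[symmetric] by auto
  then have "hmother (p * x - real k) =
      indicator (dyad (j + 1) (2 * k)) x - indicator (dyad (j + 1) (2 * k + 1)) x"
    unfolding hmother_def indicator_def by simp
  then show ?thesis unfolding haar_def haar_real_def p_def by simp
qed

lemma abs_haar_real_le: "\<bar>haar_real j k x\<bar> \<le> 2 powr (real_of_int j / 2)"
  unfolding haar_real_def abs_mult by (simp add: mult_le_cancel_left1 indicator_def)

lemma abs_haar_real_mult_le:
  "\<bar>haar_real i k x * haar_real i' k' y\<bar> \<le> 2 powr (real_of_int i / 2) * 2 powr (real_of_int i' / 2)"
  unfolding abs_mult by (intro mult_mono abs_haar_real_le) auto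

lemma dyad_children:
  "dyad (j + 1) (2 * k) \<union> dyad (j + 1) (2 * k + 1) = dyad j k"
  "dyad (j + 1) (2 * k) \<inter> dyad (j + 1) (2 * k + 1) = {}"
  unfolding set_eq_iff Un_iff Int_iff empty_iff dyad_iff two_powr_int_Suc mult.assoc by auto

lemma haar_real_nonzero: "haar_real j k x \<noteq> 0 \<Longrightarrow> x \<in> dyad j k"
  using dyad_children(1)[of j k] by (auto simp: haar_real_def indicator_def split: if_splits)

lemma haar_real_nonzero_pos: "haar_real j k x \<noteq> 0 \<Longrightarrow> 0 < x"
  using haar_real_nonzero mem_dyad by blast

lemma haar_real_mult_self: "haar_real j k x * haar_real j k x = 2 powr real_of_int j * indicator (dyad j k) x"
proof -
  have "(2::real) powr (real_of_int j / 2) * 2 powr (real_of_int j / 2) = 2 powr real_of_int j"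
    by (simp add: powr_add[symmetric])
  then show ?thesis
    using dyad_children[of j k] unfolding haar_real_def by (auto simp: indicator_def)
qed

lemma indicator_dyad_mult_haar_real:
  "indicator (dyad j m) x * haar_real i k x = 2 powr (real_of_int i / 2) *
     (indicator (dyad j m \<inter> dyad (i + 1) (2 * k)) x - indicator (dyad j m \<inter> dyad (i + 1) (2 * k + 1)) x)"
  unfolding haar_real_def indicator_inter_arith by (simp add: algebra_simps)

lemma integrable_indicator_dyad_mult_haar_real:
  "integrable lborel (\<lambda>x. indicator (dyad j m) x * haar_real i k x)"
  unfolding indicator_dyad_mult_haar_real
  by (intro integrable_mult_right Bochner_Integration.integrable_diff integrable_indicator_dyad_Int)

lemma integral_indicator_dyad_mult_haar_real:
  assumes "j \<le> i"
  shows "(LBINT x. indicator (dyad j m) x * haar_real i k x) = 0"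
proof -
  have d: "nat (i + 1 - j) = Suc (nat (i - j))" using assms by simp
  have "(2 * k) div 2 ^ Suc d = k div 2 ^ d" "(2 * k + 1) div 2 ^ Suc d = (k::nat) div 2 ^ d" for d
    by (simp_all add: div_mult2_eq)
  then have "measure lborel (dyad j m \<inter> dyad (i + 1) (2 * k)) =
      measure lborel (dyad j m \<inter> dyad (i + 1) (2 * k + 1))"
    using assms by (simp only: measure_dyad_Int d)
  then show ?thesis
    unfolding indicator_dyad_mult_haar_real
    by (simp add: Bochner_Integration.integral_diff[OF integrable_indicator_dyad_Int integrable_indicator_dyad_Int])
qed

lemma integral_haar_real_mult_less:
  assumes "i < i'"
  shows "(LBINT x. haar_real i k x * haar_real i' k' x) = 0"
proof -
  have "haar_real i k x * haar_real i' k' x = 2 powr (real_of_int i / 2) *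
      (indicator (dyad (i + 1) (2 * k)) x * haar_real i' k' x -
       indicator (dyad (i + 1) (2 * k + 1)) x * haar_real i' k' x)" for x
    unfolding haar_real_def[of i k] by (simp add: algebra_simps)
  then show ?thesis using assms
    by (simp add: Bochner_Integration.integral_diff[OF integrable_indicator_dyad_mult_haar_real
          integrable_indicator_dyad_mult_haar_real] integral_indicator_dyad_mult_haar_real)
qed

lemma haar_real_orthonormal:
  "(LBINT x. haar_real i k x * haar_real i' k' x) = (if (i, k) = (i', k') then 1 else 0)"
proof (cases i i' rule: linorder_cases)
  case less then show ?thesis by (simp add: integral_haar_real_mult_less)
next
  case greater then show ?thesis
    using integral_haar_real_mult_less[OF greater, of k' k] by (simp add: mult.commute)
next
  case equal
  show ?thesis
  proof (cases "k = k'")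
    case True
    have "(LBINT x. 2 powr real_of_int i * indicator (dyad i k) x) = 1"
      by (simp add: measure_dyad powr_add[symmetric])
    then show ?thesis using equal True by (simp add: haar_real_mult_self)
  next
    case False
    then have "(\<lambda>x. haar_real i k x * haar_real i k' x) = (\<lambda>x. 0)"
      using haar_real_nonzero[of i k] haar_real_nonzero[of i k'] by (force simp: mem_dyad)
    then show ?thesis using equal False by simp
  qed
qed

section \<open>Integrals over pairs in a common dyadic interval\<close>

definition supp_in :: "int \<Rightarrow> (real \<Rightarrow> real) \<Rightarrow> bool" where
  "supp_in N f \<longleftrightarrow> (\<forall>x. f x \<noteq> 0 \<longrightarrow> x \<in> dyad (- N) 0)"

lemma supp_in_mono: "supp_in N f \<Longrightarrow> N \<le> N' \<Longrightarrow> supp_in N' f"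
  unfolding supp_in_def using dyad_top_mono by blast

lemma supp_in_mult: "supp_in N f \<Longrightarrow> supp_in N (\<lambda>x. f x * g x)"
  unfolding supp_in_def by auto

lemma supp_in_pos: "supp_in N f \<Longrightarrow> f x \<noteq> 0 \<Longrightarrow> 0 < x"
  unfolding supp_in_def by (auto simp: mem_dyad)

lemma ex_supp_in_haar_real: "\<exists>N. supp_in N (haar_real i k)"
  using ex_dyad_top[of i k] haar_real_nonzero unfolding supp_in_def by blast

lemma integrable_bounded_supp_square:
  fixes G :: "real \<times> real \<Rightarrow> real"
  assumes G: "G \<in> borel_measurable borel" and C: "\<And>z. \<bar>G z\<bar> \<le> C"
    and supp: "\<And>z. G z \<noteq> 0 \<Longrightarrow> z \<in> {0<..R} \<times> {0<..R}"
  shows "integrable lborel G"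
proof (rule Bochner_Integration.integrable_bound)
  have "bounded ({0<..R} \<times> {0<..R})"
    by (rule bounded_subset[OF bounded_cbox[of "(0,0)" "(R,R)"]]) (auto simp: cbox_Pair_eq)
  then have "integrable lborel (indicator ({0<..R} \<times> {0<..R}) :: real \<times> real \<Rightarrow> real)"
    by (intro integrable_real_indicator emeasure_bounded_finite) (simp_all add: borel_Times)
  then show "integrable lborel (\<lambda>z. C * indicator ({0<..R} \<times> {0<..R}) z)"
    by (rule integrable_mult_right)
  show "AE z in lborel. norm (G z) \<le> norm (C * indicator ({0<..R} \<times> {0<..R}) z)"
  proof (intro AE_I2)
    fix z
    have "0 \<le> C" using C[of z] by linarith
    then show "norm (G z) \<le> norm (C * indicator ({0<..R} \<times> {0<..R}) z)"
      using C[of z] supp[of z] by (cases "G z = 0") auto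
  qed
qed (use G in simp)

lemma dyad_pairs_top:
  assumes "(x, y) \<in> dyad_pairs j" "x \<in> dyad (- N) 0"
  shows "y \<in> dyad (- max N (- j)) 0"
proof -
  let ?M = "max N (- j)"
  have pos: "0 < x" "0 < y" and eq: "dyad_index j x = dyad_index j y"
    using assms(1) by (auto simp: dyad_pairs_def)
  have "x \<in> dyad (- ?M) 0" using assms(2) dyad_top_mono[of N ?M] by auto
  then have "dyad_index (- ?M) x = 0" by (simp add: mem_dyad)
  then have "dyad_index (- ?M) y = 0"
    using dyad_index_mono[of "- ?M" j x] dyad_index_mono[of "- ?M" j y] pos eq by simp
  then show ?thesis using pos by (simp add: mem_dyad)
qed

lemma set_integrable_dyad_pairs:
  fixes G :: "real \<times> real \<Rightarrow> real"
  assumes G: "G \<in> borel_measurable borel" and C: "\<And>z. \<bar>G z\<bar> \<le> C"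
    and supp: "\<And>x y. G (x, y) \<noteq> 0 \<Longrightarrow> x \<in> dyad (- N) 0 \<or> y \<in> dyad (- N) 0"
  shows "set_integrable lborel (dyad_pairs j) G"
  unfolding set_integrable_def
proof (rule integrable_bounded_supp_square[where C = C and R = "2 powr real_of_int (max N (- j))"])
  show "(\<lambda>z. indicator (dyad_pairs j) z *\<^sub>R G z) \<in> borel_measurable borel" using G by measurable
  show "\<bar>indicator (dyad_pairs j) z *\<^sub>R G z\<bar> \<le> C" for z using C[of z] by (auto simp: indicator_def)
  fix z assume nz: "indicator (dyad_pairs j) z *\<^sub>R G z \<noteq> 0"
  obtain x y where z: "z = (x, y)" by (cases z)
  have xy: "(x, y) \<in> dyad_pairs j" "(y, x) \<in> dyad_pairs j" and "G (x, y) \<noteq> 0"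
    using nz z dyad_pairs_swap by (auto simp: indicator_def split: if_splits)
  then consider "x \<in> dyad (- N) 0" | "y \<in> dyad (- N) 0" using supp by blast
  then have "x \<in> dyad (- max N (- j)) 0 \<and> y \<in> dyad (- max N (- j)) 0"
    using dyad_pairs_top[OF xy(1)] dyad_pairs_top[OF xy(2)] dyad_top_mono[of N "max N (- j)"]
    by cases auto
  then show "z \<in> {0<..2 powr real_of_int (max N (- j))} \<times> {0<..2 powr real_of_int (max N (- j))}"
    unfolding z dyad_top by simp
qed

lemma indicator_dyad_pairs_fst:
  "0 < x \<Longrightarrow> indicator (dyad_pairs j) (x, y) = (indicator (dyad j (dyad_index j x)) y :: real)"
  by (auto simp: indicator_def dyad_pairs_def mem_dyad)

lemma indicator_dyad_pairs_snd:
  "0 < y \<Longrightarrow> indicator (dyad_pairs j) (x, y) = (indicator (dyad j (dyad_index j y)) x :: real)"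
  by (auto simp: indicator_def dyad_pairs_def mem_dyad)

lemma set_integral_dyad_pairs_fst:
  fixes u :: "real \<Rightarrow> real"
  assumes u[measurable]: "u \<in> borel_measurable borel" and C: "\<And>x. \<bar>u x\<bar> \<le> C" and su: "supp_in N u"
  shows "(LINT z:dyad_pairs j|lborel. u (fst z)) = 2 powr (- real_of_int j) * integral\<^sup>L lborel u"
proof -
  have "set_integrable lborel (dyad_pairs j) (\<lambda>z. u (fst z))"
    by (rule set_integrable_dyad_pairs[where C = C and N = N])
      (use C su in \<open>auto simp: supp_in_def simp flip: borel_prod\<close>)
  then have int: "integrable (lborel \<Otimes>\<^sub>M lborel) (\<lambda>z. indicator (dyad_pairs j) z * u (fst z))"
    unfolding set_integrable_def lborel_prod by simp
  have inner: "(LBINT y. indicator (dyad_pairs j) (x, y) * u x) = 2 powr (- real_of_int j) * u x" for x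
  proof (cases "0 < x")
    case True
    then show ?thesis unfolding indicator_dyad_pairs_fst[OF True] by (simp add: measure_dyad)
  next
    case False
    then show ?thesis using supp_in_pos[OF su, of x] by force
  qed
  have "(LINT z:dyad_pairs j|lborel. u (fst z)) =
      integral\<^sup>L (lborel \<Otimes>\<^sub>M lborel) (\<lambda>z. indicator (dyad_pairs j) z * u (fst z))"
    unfolding set_lebesgue_integral_def lborel_prod by simp
  also have "\<dots> = (LBINT x. LBINT y. indicator (dyad_pairs j) (x, y) * u x)"
    using lborel_pair.integral_fst'[OF int] by simp
  also have "\<dots> = 2 powr (- real_of_int j) * integral\<^sup>L lborel u" unfolding inner by simp
  finally show ?thesis .
qed

lemma set_integral_dyad_pairs_snd:
  fixes u :: "real \<Rightarrow> real"
  assumes u[measurable]: "u \<in> borel_measurable borel" and C: "\<And>x. \<bar>u x\<bar> \<le> C" and su: "supp_in N u"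
  shows "(LINT z:dyad_pairs j|lborel. u (snd z)) = 2 powr (- real_of_int j) * integral\<^sup>L lborel u"
proof -
  have m: "(\<lambda>z. indicator (dyad_pairs j) z * u (fst z)) \<in> borel_measurable (lborel \<Otimes>\<^sub>M lborel)"
    by measurable
  have swap: "(\<lambda>(x, y). indicator (dyad_pairs j) (y, x) * u (fst (y, x))) =
      (\<lambda>z. indicator (dyad_pairs j) z * u (snd z))"
    by (auto simp: fun_eq_iff indicator_def dyad_pairs_swap)
  have "(LINT z:dyad_pairs j|lborel. u (snd z)) =
      integral\<^sup>L (lborel \<Otimes>\<^sub>M lborel) (\<lambda>z. indicator (dyad_pairs j) z * u (fst z))"
    using lborel_pair.integral_product_swap[OF m]
    unfolding set_lebesgue_integral_def lborel_prod swap by simp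
  also have "\<dots> = (LINT z:dyad_pairs j|lborel. u (fst z))"
    unfolding set_lebesgue_integral_def lborel_prod by simp
  finally show ?thesis using set_integral_dyad_pairs_fst[OF u C su] by simp
qed

lemma set_integral_dyad_pairs_fst_snd:
  fixes f g :: "real \<Rightarrow> real"
  assumes f[measurable]: "f \<in> borel_measurable borel" and Cf: "\<And>x. \<bar>f x\<bar> \<le> Cf"
    and g[measurable]: "g \<in> borel_measurable borel" and Cg: "\<And>x. \<bar>g x\<bar> \<le> Cg" and sg: "supp_in N g"
  shows "(LINT z:dyad_pairs j|lborel. f (fst z) * g (snd z)) =
    (LBINT y. g y * (LBINT x. indicator (dyad j (dyad_index j y)) x * f x))"
proof -
  have "set_integrable lborel (dyad_pairs j) (\<lambda>z. f (fst z) * g (snd z))"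
  proof (rule set_integrable_dyad_pairs[where C = "Cf * Cg" and N = N])
    show "\<bar>f (fst z) * g (snd z)\<bar> \<le> Cf * Cg" for z
      unfolding abs_mult by (intro mult_mono Cf Cg) (use Cf[of "fst z"] in auto)
  qed (use sg in \<open>auto simp: supp_in_def simp flip: borel_prod\<close>)
  then have int: "integrable (lborel \<Otimes>\<^sub>M lborel) (\<lambda>(x, y). indicator (dyad_pairs j) (x, y) * (f x * g y))"
    unfolding set_integrable_def lborel_prod by (simp add: case_prod_beta')
  have inner: "(LBINT x. indicator (dyad_pairs j) (x, y) * (f x * g y)) =
      g y * (LBINT x. indicator (dyad j (dyad_index j y)) x * f x)" for y
  proof (cases "0 < y")
    case True
    have "(LBINT x. indicator (dyad_pairs j) (x, y) * (f x * g y)) =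
        (LBINT x. (indicator (dyad j (dyad_index j y)) x * f x) * g y)"
      unfolding indicator_dyad_pairs_snd[OF True] by (simp add: mult.assoc)
    then show ?thesis by (simp add: mult.commute)
  next
    case False
    then show ?thesis using supp_in_pos[OF sg, of y] by force
  qed
  have "(LINT z:dyad_pairs j|lborel. f (fst z) * g (snd z)) =
      (LINT (x, y)|(lborel \<Otimes>\<^sub>M lborel). indicator (dyad_pairs j) (x, y) * (f x * g y))"
    unfolding set_lebesgue_integral_def lborel_prod by (simp add: case_prod_beta')
  also have "\<dots> = (LBINT y. LBINT x. indicator (dyad_pairs j) (x, y) * (f x * g y))"
    using lborel_pair.integral_snd[OF int] by simp
  finally show ?thesis unfolding inner .
qed

lemma set_integrable_dyad_pairs_haar:
  fixes G :: "real \<times> real \<Rightarrow> real"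
  assumes "G \<in> borel_measurable borel" "\<And>z. \<bar>G z\<bar> \<le> C"
    and "\<And>x y. G (x, y) \<noteq> 0 \<Longrightarrow> haar_real i k x \<noteq> 0 \<or> haar_real i k y \<noteq> 0"
  shows "set_integrable lborel (dyad_pairs j) G"
proof -
  obtain N where N: "supp_in N (haar_real i k)" using ex_supp_in_haar_real by blast
  show ?thesis
  proof (rule set_integrable_dyad_pairs[where C = C and N = N])
    show "x \<in> dyad (- N) 0 \<or> y \<in> dyad (- N) 0" if "G (x, y) \<noteq> 0" for x y
      using N assms(3)[OF that] unfolding supp_in_def by blast
  qed (use assms in auto)
qed

lemma
  shows set_integrable_dyad_pairs_haar_fst_fst:
      "set_integrable lborel (dyad_pairs j) (\<lambda>z. haar_real i k (fst z) * haar_real i' k' (fst z))"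
    and set_integrable_dyad_pairs_haar_snd_snd:
      "set_integrable lborel (dyad_pairs j) (\<lambda>z. haar_real i k (snd z) * haar_real i' k' (snd z))"
    and set_integrable_dyad_pairs_haar_fst_snd:
      "set_integrable lborel (dyad_pairs j) (\<lambda>z. haar_real i k (fst z) * haar_real i' k' (snd z))"
  by (rule set_integrable_dyad_pairs_haar[OF _ abs_haar_real_mult_le];
      auto simp flip: borel_prod)+

lemma haar_real_eq_on_dyad_pairs:
  assumes "i < j" "(x, y) \<in> dyad_pairs j"
  shows "haar_real i k x = haar_real i k y"
proof -
  have pos: "0 < x" "0 < y" and "dyad_index j x = dyad_index j y"
    using assms(2) by (auto simp: dyad_pairs_def)
  then have "dyad_index (i + 1) x = dyad_index (i + 1) y"
    using assms(1) dyad_index_mono[of "i + 1" j] by simp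
  then show ?thesis using pos by (simp add: haar_real_def indicator_def mem_dyad)
qed

lemma set_integral_dyad_pairs_haar_fst_fst:
  "(LINT z:dyad_pairs j|lborel. haar_real i k (fst z) * haar_real i' k' (fst z)) =
    (if (i, k) = (i', k') then 2 powr (- real_of_int j) else 0)"
proof -
  obtain N where "supp_in N (haar_real i k)" using ex_supp_in_haar_real by blast
  then have "(LINT z:dyad_pairs j|lborel. (\<lambda>x. haar_real i k x * haar_real i' k' x) (fst z)) =
      2 powr (- real_of_int j) * (LBINT x. haar_real i k x * haar_real i' k' x)"
    by (intro set_integral_dyad_pairs_fst[OF _ abs_haar_real_mult_le] supp_in_mult) auto
  then show ?thesis by (simp add: haar_real_orthonormal)
qed

lemma set_integral_dyad_pairs_haar_snd_snd:
  "(LINT z:dyad_pairs j|lborel. haar_real i k (snd z) * haar_real i' k' (snd z)) =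
    (if (i, k) = (i', k') then 2 powr (- real_of_int j) else 0)"
proof -
  obtain N where "supp_in N (haar_real i k)" using ex_supp_in_haar_real by blast
  then have "(LINT z:dyad_pairs j|lborel. (\<lambda>x. haar_real i k x * haar_real i' k' x) (snd z)) =
      2 powr (- real_of_int j) * (LBINT x. haar_real i k x * haar_real i' k' x)"
    by (intro set_integral_dyad_pairs_snd[OF _ abs_haar_real_mult_le] supp_in_mult) auto
  then show ?thesis by (simp add: haar_real_orthonormal)
qed

text \<open>If the Haar function in the first variable lives at a coarser level than the pairs, it is
  constant on each level-\<open>j\<close> interval; otherwise it integrates to zero over each of them.\<close>
lemma set_integral_dyad_pairs_haar_fst_snd:
  "(LINT z:dyad_pairs j|lborel. haar_real i k (fst z) * haar_real i' k' (snd z)) =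
    (if (i, k) = (i', k') \<and> i < j then 2 powr (- real_of_int j) else 0)"
proof (cases "i < j")
  case True
  have "(LINT z:dyad_pairs j|lborel. haar_real i k (fst z) * haar_real i' k' (snd z)) =
      (LINT z:dyad_pairs j|lborel. haar_real i k (snd z) * haar_real i' k' (snd z))"
    using haar_real_eq_on_dyad_pairs[OF True] by (intro set_lebesgue_integral_cong) (auto simp: prod_eq_iff)
  then show ?thesis using True by (simp add: set_integral_dyad_pairs_haar_snd_snd)
next
  case False
  obtain N where "supp_in N (haar_real i' k')" using ex_supp_in_haar_real by blast
  then have "(LINT z:dyad_pairs j|lborel. haar_real i k (fst z) * haar_real i' k' (snd z)) =
      (LBINT y. haar_real i' k' y * (LBINT x. indicator (dyad j (dyad_index j y)) x * haar_real i k x))"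
    by (rule set_integral_dyad_pairs_fst_snd[OF haar_real_measurable abs_haar_real_le
          haar_real_measurable abs_haar_real_le])
  then show ?thesis using False by (simp add: integral_indicator_dyad_mult_haar_real)
qed

definition haar_incr_prod :: "int \<Rightarrow> nat \<Rightarrow> int \<Rightarrow> nat \<Rightarrow> real \<times> real \<Rightarrow> real" where
  "haar_incr_prod i k i' k' z =
     (haar_real i k (fst z) - haar_real i k (snd z)) * (haar_real i' k' (fst z) - haar_real i' k' (snd z))"

definition haar_tensor :: "int \<Rightarrow> nat \<Rightarrow> int \<Rightarrow> nat \<Rightarrow> real \<times> real \<Rightarrow> real" where
  "haar_tensor i k i' k' z = haar_real i k (fst z) * haar_real i' k' (snd z)"

lemma haar_incr_prod_measurable [measurable]: "haar_incr_prod i k i' k' \<in> borel_measurable borel"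
  unfolding haar_incr_prod_def[abs_def] borel_prod[symmetric] by measurable

lemma haar_tensor_measurable [measurable]: "haar_tensor i k i' k' \<in> borel_measurable borel"
  unfolding haar_tensor_def[abs_def] borel_prod[symmetric] by measurable

lemma haar_incr_prod_expand:
  "haar_incr_prod i k i' k' z =
     haar_real i k (fst z) * haar_real i' k' (fst z) + haar_real i k (snd z) * haar_real i' k' (snd z)
     - haar_real i k (fst z) * haar_real i' k' (snd z) - haar_real i' k' (fst z) * haar_real i k (snd z)"
  unfolding haar_incr_prod_def by (simp add: algebra_simps)

lemma set_integrable_dyad_pairs_haar_incr_prod:
  "set_integrable lborel (dyad_pairs j) (haar_incr_prod i k i' k')"
  unfolding haar_incr_prod_expand[abs_def]
  by (intro set_integral_add set_integral_diff set_integrable_dyad_pairs_haar_fst_fst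
      set_integrable_dyad_pairs_haar_snd_snd set_integrable_dyad_pairs_haar_fst_snd)

lemma set_integrable_dyad_pairs_haar_tensor:
  "set_integrable lborel (dyad_pairs j) (haar_tensor i k i' k')"
  unfolding haar_tensor_def[abs_def] by (rule set_integrable_dyad_pairs_haar_fst_snd)

lemma set_integral_dyad_pairs_haar_incr_prod:
  "(LINT z:dyad_pairs j|lborel. haar_incr_prod i k i' k' z) =
    (if (i, k) = (i', k') \<and> j \<le> i then 2 * 2 powr (- real_of_int j) else 0)"
  unfolding haar_incr_prod_expand
  by (auto simp: set_integral_add set_integral_diff set_integrable_dyad_pairs_haar_fst_fst
      set_integrable_dyad_pairs_haar_snd_snd set_integrable_dyad_pairs_haar_fst_snd
      set_integral_dyad_pairs_haar_fst_fst set_integral_dyad_pairs_haar_snd_snd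
      set_integral_dyad_pairs_haar_fst_snd)

lemma set_integral_dyad_pairs_haar_tensor:
  "(LINT z:dyad_pairs j|lborel. haar_tensor i k i' k' z) =
    (if (i, k) = (i', k') \<and> i < j then 2 powr (- real_of_int j) else 0)"
  unfolding haar_tensor_def by (rule set_integral_dyad_pairs_haar_fst_snd)

lemma abs_haar_incr_prod_le:
  "\<bar>haar_incr_prod i k i' k' z\<bar> \<le> haar_incr_prod i k i k z + haar_incr_prod i' k' i' k' z"
proof -
  have "\<bar>u * v\<bar> \<le> u * u + v * v" for u v :: real
  proof -
    have "2 * (\<bar>u\<bar> * \<bar>v\<bar>) \<le> u * u + v * v"
      using sum_squares_ge_zero[of "\<bar>u\<bar> - \<bar>v\<bar>" 0] by (simp add: algebra_simps power2_eq_square)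
    then show ?thesis unfolding abs_mult using mult_nonneg_nonneg[OF abs_ge_zero abs_ge_zero, of u v] by linarith
  qed
  then show ?thesis unfolding haar_incr_prod_def .
qed

definition top_square :: "int \<Rightarrow> real \<times> real \<Rightarrow> real" where
  "top_square N z = indicator (dyad (- N) 0) (fst z) * indicator (dyad (- N) 0) (snd z)"

lemma top_square_measurable [measurable]: "top_square N \<in> borel_measurable borel"
  unfolding top_square_def borel_prod[symmetric] by measurable

lemma set_integrable_dyad_pairs_top_square: "set_integrable lborel (dyad_pairs j) (top_square N)"
  by (rule set_integrable_dyad_pairs[where C = 1 and N = N])
    (auto simp: top_square_def indicator_def split: if_splits)

lemma set_integral_dyad_pairs_top_square:
  "(LINT z:dyad_pairs j|lborel. top_square N z) = 2 powr real_of_int N * 2 powr (- real_of_int (max j (- N)))"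
proof -
  let ?T = "dyad (- N) 0"
  have inner: "indicator ?T y * (LBINT x. indicator (dyad j (dyad_index j y)) x * indicator ?T x) =
      indicator ?T y * 2 powr (- real_of_int (max j (- N)))" for y :: real
  proof (cases "y \<in> ?T")
    case True
    then have "0 < y" by (simp add: mem_dyad)
    have "measure lborel (dyad j (dyad_index j y) \<inter> ?T) = 2 powr (- real_of_int (max j (- N)))"
    proof (cases "- N \<le> j")
      case True
      then show ?thesis using \<open>y \<in> ?T\<close> \<open>0 < y\<close> dyad_index_mono[OF True \<open>0 < y\<close>]
        by (simp add: Int_commute measure_dyad_Int mem_dyad)
    next
      case False
      then have "j \<le> - N" by simp
      then show ?thesis using \<open>y \<in> ?T\<close> \<open>0 < y\<close> dyad_index_mono[OF \<open>j \<le> - N\<close> \<open>0 < y\<close>]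
        by (simp add: measure_dyad_Int mem_dyad max_def)
    qed
    then show ?thesis by (simp add: indicator_inter_arith[symmetric])
  qed simp
  have "(LINT z:dyad_pairs j|lborel. top_square N z) =
      (LBINT y. indicator ?T y * (LBINT x. indicator (dyad j (dyad_index j y)) x * indicator ?T x))"
    unfolding top_square_def
    by (rule set_integral_dyad_pairs_fst_snd[where Cf = 1 and Cg = 1 and N = N])
      (auto simp: indicator_def supp_in_def)
  also have "\<dots> = 2 powr real_of_int N * 2 powr (- real_of_int (max j (- N)))"
    unfolding inner by (simp add: measure_dyad)
  finally show ?thesis .
qed

text \<open>A bound by \<open>h(x)\<^sup>2 + h'(y)\<^sup>2\<close> would not do here: its layer sum for \<open>kernel_Q\<close> diverges at
  coarse levels, so the bounded support of Haar functions is used instead.\<close>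
lemma abs_haar_tensor_le_top_square:
  assumes "supp_in N (haar_real i k)" "supp_in N (haar_real i' k')"
  shows "\<bar>haar_tensor i k i' k' z\<bar> \<le> 2 powr (real_of_int i / 2) * 2 powr (real_of_int i' / 2) * top_square N z"
  using assms abs_haar_real_mult_le[of i k "fst z" i' k' "snd z"]
  unfolding haar_tensor_def top_square_def supp_in_def by (auto simp: indicator_def)

section \<open>Layer decomposition of the off-diagonal\<close>

definition dyad_shell :: "int \<Rightarrow> (real \<times> real) set" where
  "dyad_shell j = dyad_pairs j - dyad_pairs (j + 1)"

definition dyad_shells :: "nat \<Rightarrow> (real \<times> real) set" where
  "dyad_shells n = (\<Union>j\<in>{- int n..int n}. dyad_shell j)"

definition offdiag :: "(real \<times> real) set" where
  "offdiag = {z. 0 < fst z \<and> 0 < snd z \<and> fst z \<noteq> snd z}"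

definition layer_sum :: "(real \<Rightarrow> real) \<Rightarrow> (real \<times> real \<Rightarrow> real) \<Rightarrow> nat \<Rightarrow> real" where
  "layer_sum \<Phi> G n = (\<Sum>j\<in>{- int n..int n}. \<Phi> (2 powr (- real_of_int j)) *
     ((LINT z:dyad_pairs j|lborel. G z) - (LINT z:dyad_pairs (j + 1)|lborel. G z)))"

lemma sets_dyad_shell [measurable]: "dyad_shell j \<in> sets borel"
  unfolding dyad_shell_def by measurable

lemma sets_dyad_shells [measurable]: "dyad_shells n \<in> sets borel"
  unfolding dyad_shells_def by measurable

lemma ddist_dyad_shell: "z \<in> dyad_shell j \<Longrightarrow> ddist (fst z) (snd z) = 2 powr (- real_of_int j)"
  unfolding dyad_shell_def using ddist_eq_dyad_pairs_level[of "fst z" "snd z" j] by auto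

lemma dyad_shell_disjoint: "j \<noteq> j' \<Longrightarrow> dyad_shell j \<inter> dyad_shell j' = {}"
  unfolding dyad_shell_def using dyad_pairs_antimono[of "j + 1" j'] dyad_pairs_antimono[of "j' + 1" j]
  by (cases "j < j'") auto

lemma dyad_pairs_eq_shell_Un:
  "dyad_pairs j = dyad_shell j \<union> dyad_pairs (j + 1)" "dyad_shell j \<inter> dyad_pairs (j + 1) = {}"
  unfolding dyad_shell_def using dyad_pairs_antimono[of j "j + 1"] by auto

lemma offdiag_eq_UN_dyad_shell: "offdiag = (\<Union>j. dyad_shell j)"
proof
  show "offdiag \<subseteq> (\<Union>j. dyad_shell j)"
    using ex_dyad_pairs_level by (force simp: offdiag_def dyad_shell_def)
  show "(\<Union>j. dyad_shell j) \<subseteq> offdiag"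
    using dyad_pairs_diag by (force simp: offdiag_def dyad_shell_def dyad_pairs_def)
qed

lemma incseq_dyad_shells: "incseq dyad_shells"
  unfolding dyad_shells_def by (intro incseq_SucI UN_mono) auto

lemma UN_dyad_shells: "(\<Union>n. dyad_shells n) = offdiag"
proof -
  have "j \<in> {- int (nat \<bar>j\<bar>)..int (nat \<bar>j\<bar>)}" for j by auto
  then show ?thesis unfolding offdiag_eq_UN_dyad_shell dyad_shells_def by blast
qed

lemma dyad_shells_subset_offdiag: "dyad_shells n \<subseteq> offdiag"
  using UN_dyad_shells by blast

lemma sets_offdiag [measurable]: "offdiag \<in> sets borel"
  unfolding UN_dyad_shells[symmetric] by measurable

text \<open>On a shell the dyadic distance is constant, and the integral of \<open>G\<close> over the shell is the
  difference of its integrals over two consecutive levels.\<close>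
lemma set_integral_dyad_shells:
  fixes G :: "real \<times> real \<Rightarrow> real" and \<Phi> :: "real \<Rightarrow> real"
  assumes G: "\<And>j. set_integrable lborel (dyad_pairs j) G"
  shows "set_integrable lborel (dyad_shells n) (\<lambda>z. G z * \<Phi> (ddist (fst z) (snd z)))"
    and "(LINT z:dyad_shells n|lborel. G z * \<Phi> (ddist (fst z) (snd z))) = layer_sum \<Phi> G n"
proof -
  have G_shell: "set_integrable lborel (dyad_shell j) G" for j
    by (rule set_integrable_subset[OF G[of j]]) (auto simp: dyad_shell_def)
  have cong: "set_integrable lborel (dyad_shell j) (\<lambda>z. G z * \<Phi> (ddist (fst z) (snd z))) =
      set_integrable lborel (dyad_shell j) (\<lambda>z. G z * \<Phi> (2 powr (- real_of_int j)))" for j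
    by (rule set_integrable_cong) (auto simp: ddist_dyad_shell)
  have int: "set_integrable lborel (dyad_shell j) (\<lambda>z. G z * \<Phi> (ddist (fst z) (snd z)))" for j
    unfolding cong by (rule set_integrable_mult_left) (rule G_shell)
  have val: "(LINT z:dyad_shell j|lborel. G z * \<Phi> (ddist (fst z) (snd z))) = \<Phi> (2 powr (- real_of_int j)) *
      ((LINT z:dyad_pairs j|lborel. G z) - (LINT z:dyad_pairs (j + 1)|lborel. G z))" for j
  proof -
    have "(LINT z:dyad_pairs j|lborel. G z) = (LINT z:dyad_shell j|lborel. G z) + (LINT z:dyad_pairs (j + 1)|lborel. G z)"
      by (subst dyad_pairs_eq_shell_Un(1)) (rule set_integral_Un[OF dyad_pairs_eq_shell_Un(2) G_shell G])
    moreover have "(LINT z:dyad_shell j|lborel. G z * \<Phi> (ddist (fst z) (snd z))) =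
        (LINT z:dyad_shell j|lborel. G z * \<Phi> (2 powr (- real_of_int j)))"
      by (rule set_lebesgue_integral_cong) (auto simp: ddist_dyad_shell)
    ultimately show ?thesis by (simp add: set_integral_mult_left algebra_simps)
  qed
  have disj: "disjoint_family_on dyad_shell {- int n..int n}"
    unfolding disjoint_family_on_def using dyad_shell_disjoint by blast
  show "set_integrable lborel (dyad_shells n) (\<lambda>z. G z * \<Phi> (ddist (fst z) (snd z)))"
    unfolding dyad_shells_def by (rule set_integrable_UN) (use int disj in auto)
  show "(LINT z:dyad_shells n|lborel. G z * \<Phi> (ddist (fst z) (snd z))) = layer_sum \<Phi> G n"
    unfolding dyad_shells_def layer_sum_def by (subst set_integral_finite_Union) (use int disj val in auto)
qed

lemma indicator_dyad_shells_mult: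
  fixes H :: "real \<times> real \<Rightarrow> real"
  assumes "\<And>j z. z \<in> dyad_shell j \<Longrightarrow> H z = c j z"
  shows "indicator (dyad_shells n) z * H z = (\<Sum>j\<in>{- int n..int n}. indicator (dyad_shell j) z * c j z)"
proof (cases "z \<in> dyad_shells n")
  case True
  then obtain j0 where j0: "j0 \<in> {- int n..int n}" "z \<in> dyad_shell j0" unfolding dyad_shells_def by blast
  have "z \<notin> dyad_shell j" if "j \<noteq> j0" for j using dyad_shell_disjoint[OF that] j0(2) by blast
  then have "(\<Sum>j\<in>{- int n..int n} - {j0}. indicator (dyad_shell j) z * c j z) = 0"
    by (intro sum.neutral) auto
  then have "(\<Sum>j\<in>{- int n..int n}. indicator (dyad_shell j) z * c j z) = indicator (dyad_shell j0) z * c j0 z"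
    using sum.remove[of "{- int n..int n}" j0 "\<lambda>j. indicator (dyad_shell j) z * c j z"] j0(1) by simp
  then show ?thesis using True j0 assms by simp
next
  case False
  then show ?thesis by (auto simp: dyad_shells_def intro!: sum.neutral)
qed

lemma borel_measurable_offdiag_kernel:
  fixes G :: "real \<times> real \<Rightarrow> real" and \<Phi> :: "real \<Rightarrow> real"
  assumes [measurable]: "G \<in> borel_measurable borel"
  shows "(\<lambda>z. indicator offdiag z * (G z * \<Phi> (ddist (fst z) (snd z)))) \<in> borel_measurable borel"
proof (rule borel_measurable_LIMSEQ_real[where u = "\<lambda>n z. indicator (dyad_shells n) z * (G z * \<Phi> (ddist (fst z) (snd z)))"])
  fix z :: "real \<times> real"
  show "(\<lambda>n. indicator (dyad_shells n) z * (G z * \<Phi> (ddist (fst z) (snd z)))) \<longlonglongrightarrow>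
      indicator offdiag z * (G z * \<Phi> (ddist (fst z) (snd z)))"
  proof (cases "z \<in> offdiag")
    case True
    then obtain n0 where "z \<in> dyad_shells n0" using UN_dyad_shells by blast
    then have "eventually (\<lambda>n. z \<in> dyad_shells n) sequentially"
      using incseq_dyad_shells unfolding eventually_sequentially incseq_def by blast
    then have "eventually (\<lambda>n. indicator (dyad_shells n) z * (G z * \<Phi> (ddist (fst z) (snd z))) =
        indicator offdiag z * (G z * \<Phi> (ddist (fst z) (snd z)))) sequentially"
      by eventually_elim (use True in simp)
    then show ?thesis by (rule tendsto_eventually)
  next
    case False
    then have "z \<notin> dyad_shells n" for n using dyad_shells_subset_offdiag by blast
    then show ?thesis using False by simp
  qed
next
  fix n
  have "(\<lambda>z. indicator (dyad_shells n) z * (G z * \<Phi> (ddist (fst z) (snd z)))) =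
      (\<lambda>z. \<Sum>j\<in>{- int n..int n}. indicator (dyad_shell j) z * (G z * \<Phi> (2 powr (- real_of_int j))))"
    by (rule ext, rule indicator_dyad_shells_mult) (simp add: ddist_dyad_shell)
  also have "\<dots> \<in> borel_measurable borel" by measurable
  finally show "(\<lambda>z. indicator (dyad_shells n) z * (G z * \<Phi> (ddist (fst z) (snd z)))) \<in> borel_measurable borel" .
qed

lemma set_integrable_offdiag_nonneg:
  fixes P :: "real \<times> real \<Rightarrow> real" and \<Phi> :: "real \<Rightarrow> real"
  assumes "\<And>z. 0 \<le> P z" "\<And>j. 0 \<le> \<Phi> (2 powr (- real_of_int j))"
    and "\<And>j. set_integrable lborel (dyad_pairs j) P"
    and "layer_sum \<Phi> P \<longlonglongrightarrow> l"
  shows "set_integrable lborel offdiag (\<lambda>z. P z * \<Phi> (ddist (fst z) (snd z)))"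
proof -
  have "set_integrable lborel (\<Union>n. dyad_shells n) (\<lambda>z. P z * \<Phi> (ddist (fst z) (snd z)))"
  proof (rule pos_integrable_to_top[where l = l])
    show "mono dyad_shells" using incseq_dyad_shells by (simp add: incseq_def mono_def)
    show "0 \<le> P z * \<Phi> (ddist (fst z) (snd z))" if "z \<in> dyad_shells n" for z n
      using that assms(1)[of z] assms(2) by (auto simp: dyad_shells_def ddist_dyad_shell intro!: mult_nonneg_nonneg)
  qed (use set_integral_dyad_shells[OF assms(3)] assms(4) in auto)
  then show ?thesis unfolding UN_dyad_shells .
qed

lemma set_integrable_offdiag_bound:
  fixes G P :: "real \<times> real \<Rightarrow> real" and \<Phi> :: "real \<Rightarrow> real"
  assumes "G \<in> borel_measurable borel" "\<And>z. \<bar>G z\<bar> \<le> P z"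
    and "\<And>j. 0 \<le> \<Phi> (2 powr (- real_of_int j))"
    and "set_integrable lborel offdiag (\<lambda>z. P z * \<Phi> (ddist (fst z) (snd z)))"
  shows "set_integrable lborel offdiag (\<lambda>z. G z * \<Phi> (ddist (fst z) (snd z)))"
proof (rule set_integrable_bound[OF assms(4)])
  show "set_borel_measurable lborel offdiag (\<lambda>z. G z * \<Phi> (ddist (fst z) (snd z)))"
    unfolding set_borel_measurable_def using borel_measurable_offdiag_kernel[OF assms(1)] by simp
  show "AE z\<in>offdiag in lborel. norm (G z * \<Phi> (ddist (fst z) (snd z))) \<le> norm (P z * \<Phi> (ddist (fst z) (snd z)))"
  proof (intro AE_I2 impI)
    fix z assume "z \<in> offdiag"
    then obtain j where "ddist (fst z) (snd z) = 2 powr (- real_of_int j)"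
      using ddist_dyad_shell unfolding offdiag_eq_UN_dyad_shell by blast
    then show "norm (G z * \<Phi> (ddist (fst z) (snd z))) \<le> norm (P z * \<Phi> (ddist (fst z) (snd z)))"
      using assms(2)[of z] assms(3)[of j] by (simp add: abs_mult mult_right_mono)
  qed
qed

lemma layer_sum_tendsto_set_integral_offdiag:
  fixes G :: "real \<times> real \<Rightarrow> real" and \<Phi> :: "real \<Rightarrow> real"
  assumes "\<And>j. set_integrable lborel (dyad_pairs j) G"
    and "set_integrable lborel offdiag (\<lambda>z. G z * \<Phi> (ddist (fst z) (snd z)))"
  shows "layer_sum \<Phi> G \<longlonglongrightarrow> (LINT z:offdiag|lborel. G z * \<Phi> (ddist (fst z) (snd z)))"
proof -
  have "(\<lambda>n. LINT z:dyad_shells n|lborel. G z * \<Phi> (ddist (fst z) (snd z))) \<longlonglongrightarrow>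
      (LINT z:(\<Union>n. dyad_shells n)|lborel. G z * \<Phi> (ddist (fst z) (snd z)))"
    by (rule set_integral_cont_up) (use incseq_dyad_shells assms(2) UN_dyad_shells in auto)
  then show ?thesis unfolding set_integral_dyad_shells(2)[OF assms(1)] UN_dyad_shells .
qed

section \<open>Kernels and layer sums for Haar functions\<close>

definition kernel_E :: "real \<Rightarrow> real \<Rightarrow> real" where
  "kernel_E s t = 1 / t powr (2 * s) / t"

definition kernel_Q :: "real \<Rightarrow> real \<Rightarrow> real" where
  "kernel_Q s t = t powr (2 * s) / t"

lemma kernel_E_nonneg: "0 \<le> t \<Longrightarrow> 0 \<le> kernel_E s t"
  unfolding kernel_E_def by simp

lemma kernel_Q_nonneg: "0 \<le> t \<Longrightarrow> 0 \<le> kernel_Q s t"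
  unfolding kernel_Q_def by simp

lemma kernel_E_two_powr_mult:
  "kernel_E s (2 powr (- real_of_int j)) * 2 powr (- real_of_int j) = 2 powr (2 * s * real_of_int j)"
proof -
  have "kernel_E s (2 powr (- real_of_int j)) * 2 powr (- real_of_int j) = 1 / 2 powr (- real_of_int j * (2 * s))"
    by (simp add: kernel_E_def powr_powr)
  also have "\<dots> = 2 powr (- (- real_of_int j * (2 * s)))" by (rule powr_minus_divide[symmetric])
  also have "\<dots> = 2 powr (2 * s * real_of_int j)" by (simp add: algebra_simps)
  finally show ?thesis .
qed

lemma kernel_Q_two_powr_mult:
  "kernel_Q s (2 powr (- real_of_int j)) * 2 powr (- real_of_int j) = 2 powr (- 2 * s * real_of_int j)"
proof -
  have "kernel_Q s (2 powr (- real_of_int j)) * 2 powr (- real_of_int j) = 2 powr (- real_of_int j * (2 * s))"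
    by (simp add: kernel_Q_def powr_powr)
  also have "\<dots> = 2 powr (- 2 * s * real_of_int j)" by (simp add: algebra_simps)
  finally show ?thesis .
qed

lemma two_powr_mult_int_diff:
  "(2::real) powr (c * real_of_int (i - int m)) = 2 powr (c * real_of_int i) * (2 powr (- c)) ^ m"
proof -
  have "(2::real) powr (c * real_of_int (i - int m)) = 2 powr (c * real_of_int i + real m * (- c))"
    by (simp add: algebra_simps)
  then show ?thesis unfolding powr_add by (simp add: powr_power)
qed

lemma two_powr_mult_int_add:
  "(2::real) powr (c * real_of_int (i + int m)) = 2 powr (c * real_of_int i) * (2 powr c) ^ m"
proof -
  have "(2::real) powr (c * real_of_int (i + int m)) = 2 powr (c * real_of_int i + real m * c)"
    by (simp add: algebra_simps)
  then show ?thesis unfolding powr_add by (simp add: powr_power)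
qed

lemma two_powr_neg_less_1: "0 < s \<Longrightarrow> (2::real) powr (- 2 * s) < 1"
  using powr_less_mono[of "- 2 * s" 0 2] by simp

lemma geometric_with_head_sums:
  fixes q :: real
  assumes "\<bar>q\<bar> < 1"
  shows "(\<lambda>m. A * q ^ m + (if m = 0 then B else 0)) sums (A / (1 - q) + B)"
proof -
  have "(\<lambda>m. A * q ^ m) sums (A * (1 / (1 - q)))"
    using assms by (intro sums_mult geometric_sums) simp
  then show ?thesis
    using sums_add[OF _ sums_single[where f = "\<lambda>_. B" and i = 0]] by simp
qed

lemma symmetric_sums_downward:
  fixes t :: "int \<Rightarrow> real" and f :: "nat \<Rightarrow> real"
  assumes zero: "\<And>j. J < j \<Longrightarrow> t j = 0" and f: "\<And>m. t (J - int m) = f m" and "f sums l"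
  shows "(\<lambda>n. \<Sum>j\<in>{- int n..int n}. t j) \<longlonglongrightarrow> l"
proof -
  define g where "g n = nat (int n + J) + 1" for n
  have "(\<Sum>m<g n. f m) = (\<Sum>j\<in>{- int n..int n}. t j)" if "nat \<bar>J\<bar> \<le> n" for n
  proof -
    have J: "J \<le> int n" "- int n \<le> J" using that by auto
    have "(\<Sum>j\<in>{- int n..int n}. t j) = (\<Sum>j\<in>{- int n..J}. t j)"
      by (rule sum.mono_neutral_right) (use J zero in auto)
    also have "\<dots> = (\<Sum>m<g n. t (J - int m))"
      by (rule sum.reindex_bij_witness[where i = "\<lambda>m. J - int m" and j = "\<lambda>x. nat (J - x)"])
        (use J in \<open>auto simp: g_def\<close>)
    finally show ?thesis by (simp add: f)
  qed
  then have "eventually (\<lambda>n. (\<Sum>m<g n. f m) = (\<Sum>j\<in>{- int n..int n}. t j)) sequentially"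
    by (rule eventually_sequentiallyI)
  moreover have "filterlim g at_top sequentially"
    unfolding filterlim_at_top
  proof (intro allI eventually_sequentiallyI)
    show "Z \<le> g n" if "Z + nat \<bar>J\<bar> \<le> n" for Z n using that unfolding g_def by auto
  qed
  then have "(\<lambda>n. \<Sum>m<g n. f m) \<longlonglongrightarrow> l"
    using \<open>f sums l\<close> unfolding sums_def by (rule filterlim_compose[rotated])
  ultimately show ?thesis by (rule Lim_transform_eventually[rotated])
qed

lemma symmetric_sums_upward:
  fixes t :: "int \<Rightarrow> real" and f :: "nat \<Rightarrow> real"
  assumes "\<And>j. j < J \<Longrightarrow> t j = 0" and "\<And>m. t (J + int m) = f m" and "f sums l"
  shows "(\<lambda>n. \<Sum>j\<in>{- int n..int n}. t j) \<longlonglongrightarrow> l"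
proof -
  have "(\<lambda>n. \<Sum>j\<in>{- int n..int n}. t (- j)) \<longlonglongrightarrow> l"
    by (rule symmetric_sums_downward[where J = "- J" and f = f]) (use assms in \<open>auto simp: add.commute\<close>)
  moreover have "(\<Sum>j\<in>{- int n..int n}. t (- j)) = (\<Sum>j\<in>{- int n..int n}. t j)" for n
    by (rule sum.reindex_bij_witness[where i = uminus and j = uminus]) auto
  ultimately show ?thesis by simp
qed

lemma layer_sum_haar_incr_prod:
  assumes "0 < s"
  shows "layer_sum (kernel_E s) (haar_incr_prod i k i k) \<longlonglongrightarrow> 2 powr (2 * s * real_of_int i) * gamma2 s"
proof -
  let ?q = "(2::real) powr (- 2 * s)"
  define t where "t j = kernel_E s (2 powr (- real_of_int j)) *
    ((if j \<le> i then 2 * 2 powr (- real_of_int j) else 0) - (if j + 1 \<le> i then 2 * 2 powr (- real_of_int (j + 1)) else 0))" for j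
  have t: "t j = (if j < i then 1 else if j = i then 2 else 0) * 2 powr (2 * s * real_of_int j)" for j
  proof -
    have "(if j \<le> i then 2 * 2 powr (- real_of_int j) else 0) - (if j + 1 \<le> i then 2 * 2 powr (- real_of_int (j + 1)) else 0) =
        (if j < i then 1 else if j = i then 2 else 0) * 2 powr (- real_of_int j)"
      unfolding two_powr_neg_int_Suc by auto
    then show ?thesis
      unfolding t_def by (simp add: kernel_E_two_powr_mult)
  qed
  have "layer_sum (kernel_E s) (haar_incr_prod i k i k) = (\<lambda>n. \<Sum>j\<in>{- int n..int n}. t j)"
    by (simp add: layer_sum_def t_def set_integral_dyad_pairs_haar_incr_prod fun_eq_iff)
  also have "\<dots> \<longlonglongrightarrow> 2 powr (2 * s * real_of_int i) / (1 - ?q) + 2 powr (2 * s * real_of_int i)"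
  proof (rule symmetric_sums_downward[OF _ _ geometric_with_head_sums])
    show "t (i - int m) = 2 powr (2 * s * real_of_int i) * ?q ^ m + (if m = 0 then 2 powr (2 * s * real_of_int i) else 0)" for m
      unfolding t two_powr_mult_int_diff by simp
  qed (use two_powr_neg_less_1[OF assms] in \<open>auto simp: t\<close>)
  also have "2 powr (2 * s * real_of_int i) / (1 - ?q) + 2 powr (2 * s * real_of_int i) =
      2 powr (2 * s * real_of_int i) * gamma2 s"
  proof -
    have "1 - ?q \<noteq> 0" using two_powr_neg_less_1[OF assms] assms by simp
    then show ?thesis by (simp add: gamma2_def field_simps)
  qed
  finally show ?thesis .
qed

lemma layer_sum_haar_tensor:
  assumes "0 < s"
  shows "layer_sum (kernel_Q s) (haar_tensor i k i k) \<longlonglongrightarrow> 2 powr (- 2 * s * real_of_int i) * gamma1 s"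
proof -
  let ?q = "(2::real) powr (- 2 * s)"
  let ?c = "(2::real) powr (- 2 * s * real_of_int i)"
  define t where "t j = kernel_Q s (2 powr (- real_of_int j)) *
    ((if i < j then 2 powr (- real_of_int j) else 0) - (if i < j + 1 then 2 powr (- real_of_int (j + 1)) else 0))" for j
  have t: "t j = (if i < j then 1 / 2 else if j = i then - 1 / 2 else 0) * 2 powr (- 2 * s * real_of_int j)" for j
  proof -
    have "(if i < j then 2 powr (- real_of_int j) else 0) - (if i < j + 1 then 2 powr (- real_of_int (j + 1)) else 0) =
        (if i < j then 1 / 2 else if j = i then - 1 / 2 else 0) * 2 powr (- real_of_int j)"
      unfolding two_powr_neg_int_Suc by auto
    then show ?thesis
      unfolding t_def by (simp add: kernel_Q_two_powr_mult)
  qed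
  have "layer_sum (kernel_Q s) (haar_tensor i k i k) = (\<lambda>n. \<Sum>j\<in>{- int n..int n}. t j)"
    by (simp add: layer_sum_def t_def set_integral_dyad_pairs_haar_tensor fun_eq_iff)
  also have "\<dots> \<longlonglongrightarrow> ?c / 2 / (1 - ?q) + - ?c"
  proof (rule symmetric_sums_upward[OF _ _ geometric_with_head_sums])
    show "t (i + int m) = ?c / 2 * ?q ^ m + (if m = 0 then - ?c else 0)" for m
      unfolding t two_powr_mult_int_add by simp
  qed (use two_powr_neg_less_1[OF assms] in \<open>auto simp: t\<close>)
  also have "?c / 2 / (1 - ?q) + - ?c = ?c * gamma1 s"
  proof -
    have "(2::real) powr (1 - 2 * s) = 2 * ?q" by (simp add: powr_diff powr_minus divide_inverse)
    moreover have "1 - ?q \<noteq> 0" using two_powr_neg_less_1[OF assms] assms by simp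
    ultimately show ?thesis by (simp add: gamma1_def field_simps)
  qed
  finally show ?thesis .
qed

lemma layer_sum_top_square:
  assumes "0 < s"
  shows "convergent (layer_sum (kernel_Q s) (top_square N))"
proof -
  let ?q = "(2::real) powr (- 2 * s)"
  let ?c = "(2::real) powr real_of_int N / 2 * 2 powr (2 * s * real_of_int N)"
  define t where "t j = kernel_Q s (2 powr (- real_of_int j)) * (2 powr real_of_int N *
    (2 powr (- real_of_int (max j (- N))) - 2 powr (- real_of_int (max (j + 1) (- N)))))" for j
  have t: "t j = (if - N \<le> j then 2 powr real_of_int N / 2 else 0) * 2 powr (- 2 * s * real_of_int j)" for j
  proof -
    have "2 powr real_of_int N * (2 powr (- real_of_int (max j (- N))) - 2 powr (- real_of_int (max (j + 1) (- N)))) =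
        (if - N \<le> j then 2 powr real_of_int N / 2 else 0) * 2 powr (- real_of_int j)"
      by (auto simp: max_def powr_diff)
    then show ?thesis
      unfolding t_def by (simp add: kernel_Q_two_powr_mult)
  qed
  have "layer_sum (kernel_Q s) (top_square N) = (\<lambda>n. \<Sum>j\<in>{- int n..int n}. t j)"
    by (simp add: layer_sum_def t_def set_integral_dyad_pairs_top_square fun_eq_iff algebra_simps)
  also have "\<dots> \<longlonglongrightarrow> ?c / (1 - ?q) + 0"
  proof (rule symmetric_sums_upward[OF _ _ geometric_with_head_sums])
    show "t (- N + int m) = ?c * ?q ^ m + (if m = 0 then 0 else 0)" for m
      unfolding t two_powr_mult_int_add by simp
  qed (use two_powr_neg_less_1[OF assms] in \<open>auto simp: t\<close>)
  finally show ?thesis by (rule convergentI)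
qed

lemma set_integral_offdiag_eq_lim:
  fixes G :: "real \<times> real \<Rightarrow> real" and \<Phi> :: "real \<Rightarrow> real"
  assumes "\<And>j. set_integrable lborel (dyad_pairs j) G"
    and "set_integrable lborel offdiag (\<lambda>z. G z * \<Phi> (ddist (fst z) (snd z)))"
    and "layer_sum \<Phi> G \<longlonglongrightarrow> l"
  shows "(LINT z:offdiag|lborel. G z * \<Phi> (ddist (fst z) (snd z))) = l"
  using LIMSEQ_unique[OF layer_sum_tendsto_set_integral_offdiag[OF assms(1,2)] assms(3)] .

lemma set_integrable_offdiag_haar_incr_prod:
  assumes "0 < s"
  shows "set_integrable lborel offdiag (\<lambda>z. haar_incr_prod i k i' k' z * kernel_E s (ddist (fst z) (snd z)))"
proof (rule set_integrable_offdiag_bound[OF _ abs_haar_incr_prod_le])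
  let ?P = "\<lambda>z. haar_incr_prod i k i k z + haar_incr_prod i' k' i' k' z"
  have int: "set_integrable lborel (dyad_pairs j) ?P" for j
    by (intro set_integral_add set_integrable_dyad_pairs_haar_incr_prod)
  have "layer_sum (kernel_E s) ?P = (\<lambda>n. layer_sum (kernel_E s) (haar_incr_prod i k i k) n +
      layer_sum (kernel_E s) (haar_incr_prod i' k' i' k') n)"
    by (simp add: fun_eq_iff layer_sum_def set_integral_add(2)[OF
        set_integrable_dyad_pairs_haar_incr_prod set_integrable_dyad_pairs_haar_incr_prod]
        sum.distrib[symmetric] algebra_simps)
  then have "layer_sum (kernel_E s) ?P \<longlonglongrightarrow> 2 powr (2 * s * real_of_int i) * gamma2 s +
      2 powr (2 * s * real_of_int i') * gamma2 s"
    using tendsto_add[OF layer_sum_haar_incr_prod layer_sum_haar_incr_prod] assms by simp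
  then show "set_integrable lborel offdiag (\<lambda>z. ?P z * kernel_E s (ddist (fst z) (snd z)))"
    using int by (intro set_integrable_offdiag_nonneg) (auto simp: haar_incr_prod_def kernel_E_nonneg)
qed (auto intro: kernel_E_nonneg)

lemma set_integrable_offdiag_haar_tensor:
  assumes "0 < s"
  shows "set_integrable lborel offdiag (\<lambda>z. haar_tensor i k i' k' z * kernel_Q s (ddist (fst z) (snd z)))"
proof -
  obtain N1 N2 where "supp_in N1 (haar_real i k)" "supp_in N2 (haar_real i' k')"
    using ex_supp_in_haar_real by metis
  then have N: "supp_in (max N1 N2) (haar_real i k)" "supp_in (max N1 N2) (haar_real i' k')"
    by (auto elim: supp_in_mono)
  let ?C = "2 powr (real_of_int i / 2) * 2 powr (real_of_int i' / 2)"
  obtain l where lim: "layer_sum (kernel_Q s) (top_square (max N1 N2)) \<longlonglongrightarrow> l"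
    using layer_sum_top_square[OF assms] by (auto simp: convergent_def)
  have "set_integrable lborel offdiag
      (\<lambda>z. top_square (max N1 N2) z * kernel_Q s (ddist (fst z) (snd z)))"
    by (rule set_integrable_offdiag_nonneg[OF _ _ set_integrable_dyad_pairs_top_square lim])
      (auto simp: top_square_def kernel_Q_nonneg)
  then have "set_integrable lborel offdiag
      (\<lambda>z. ?C * (top_square (max N1 N2) z * kernel_Q s (ddist (fst z) (snd z))))"
    by (rule set_integrable_mult_right)
  then have dom: "set_integrable lborel offdiag
      (\<lambda>z. (?C * top_square (max N1 N2) z) * kernel_Q s (ddist (fst z) (snd z)))"
    by (simp only: mult.assoc)
  show ?thesis
    by (rule set_integrable_offdiag_bound[OF haar_tensor_measurable abs_haar_tensor_le_top_square[OF N] _ dom])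
      (auto intro: kernel_Q_nonneg)
qed

lemma set_integral_offdiag_haar_incr_prod:
  assumes "0 < s"
  shows "(LINT z:offdiag|lborel. haar_incr_prod i k i' k' z * kernel_E s (ddist (fst z) (snd z))) =
    (if (i, k) = (i', k') then 2 powr (2 * s * real_of_int i) * gamma2 s else 0)"
proof (rule set_integral_offdiag_eq_lim[OF set_integrable_dyad_pairs_haar_incr_prod
      set_integrable_offdiag_haar_incr_prod[OF assms]])
  show "layer_sum (kernel_E s) (haar_incr_prod i k i' k') \<longlonglongrightarrow>
      (if (i, k) = (i', k') then 2 powr (2 * s * real_of_int i) * gamma2 s else 0)"
  proof (cases "(i, k) = (i', k')")
    case False
    then have "(LINT z:dyad_pairs j|lborel. haar_incr_prod i k i' k' z) = 0" for j
      by (auto simp: set_integral_dyad_pairs_haar_incr_prod)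
    then have "layer_sum (kernel_E s) (haar_incr_prod i k i' k') = (\<lambda>n. 0)"
      by (simp add: fun_eq_iff layer_sum_def)
    then show ?thesis using False by auto
  qed (use layer_sum_haar_incr_prod[OF assms, of i k] in auto)
qed

lemma set_integral_offdiag_haar_tensor:
  assumes "0 < s"
  shows "(LINT z:offdiag|lborel. haar_tensor i k i' k' z * kernel_Q s (ddist (fst z) (snd z))) =
    (if (i, k) = (i', k') then 2 powr (- 2 * s * real_of_int i) * gamma1 s else 0)"
proof (rule set_integral_offdiag_eq_lim[OF set_integrable_dyad_pairs_haar_tensor
      set_integrable_offdiag_haar_tensor[OF assms]])
  show "layer_sum (kernel_Q s) (haar_tensor i k i' k') \<longlonglongrightarrow>
      (if (i, k) = (i', k') then 2 powr (- 2 * s * real_of_int i) * gamma1 s else 0)"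
  proof (cases "(i, k) = (i', k')")
    case False
    then have "(LINT z:dyad_pairs j|lborel. haar_tensor i k i' k' z) = 0" for j
      by (auto simp: set_integral_dyad_pairs_haar_tensor)
    then have "layer_sum (kernel_Q s) (haar_tensor i k i' k') = (\<lambda>n. 0)"
      by (simp add: fun_eq_iff layer_sum_def)
    then show ?thesis using False by auto
  qed (use layer_sum_haar_tensor[OF assms, of i k] in auto)
qed

section \<open>The two forms on Haar functions and their finite combinations\<close>

definition Eform_integrand :: "real \<Rightarrow> (real \<Rightarrow> complex) \<Rightarrow> (real \<Rightarrow> complex) \<Rightarrow> real \<times> real \<Rightarrow> complex" where
  "Eform_integrand s \<phi> \<psi> z = ((\<phi> (fst z) - \<phi> (snd z)) * (cnj (\<psi> (fst z)) - cnj (\<psi> (snd z))))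
     / complex_of_real (ddist (fst z) (snd z) powr (2 * s)) / complex_of_real (ddist (fst z) (snd z))"

definition Qform_integrand :: "real \<Rightarrow> (real \<Rightarrow> complex) \<Rightarrow> (real \<Rightarrow> complex) \<Rightarrow> real \<times> real \<Rightarrow> complex" where
  "Qform_integrand s \<phi> \<psi> z = complex_of_real (ddist (fst z) (snd z) powr (2 * s)) * \<phi> (fst z) * cnj (\<psi> (snd z))
     / complex_of_real (ddist (fst z) (snd z))"

lemma Eform_eq_integrand: "Eform s \<phi> \<psi> = (LINT z:{0<..} \<times> {0<..}|lborel. Eform_integrand s \<phi> \<psi> z)"
  unfolding Eform_def Eform_integrand_def ..

lemma Qform_eq_integrand: "Qform s \<phi> \<psi> = (LINT z:{0<..} \<times> {0<..}|lborel. Qform_integrand s \<phi> \<psi> z)"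
  unfolding Qform_def Qform_integrand_def ..

lemma Eform_integrand_haar:
  "Eform_integrand s (haar i k) (haar i' k') z =
    complex_of_real (haar_incr_prod i k i' k' z * kernel_E s (ddist (fst z) (snd z)))"
  unfolding Eform_integrand_def haar_eq_haar_real haar_incr_prod_def kernel_E_def by simp

lemma Qform_integrand_haar:
  "Qform_integrand s (haar i k) (haar i' k') z =
    complex_of_real (haar_tensor i k i' k' z * kernel_Q s (ddist (fst z) (snd z)))"
  unfolding Qform_integrand_def haar_eq_haar_real haar_tensor_def kernel_Q_def by simp

text \<open>On the diagonal the dyadic distance vanishes, and since \<open>x / 0 = 0\<close> so do the integrands
  of both forms; hence they may be integrated over \<^const>\<open>offdiag\<close> instead of the quadrant.\<close>
lemma set_integral_quadrant_eq_offdiag: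
  fixes g :: "real \<times> real \<Rightarrow> real"
  assumes "\<And>x. 0 < x \<Longrightarrow> g (x, x) = 0"
  shows "set_integrable lborel offdiag g \<Longrightarrow> set_integrable lborel ({0<..} \<times> {0<..}) (\<lambda>z. complex_of_real (g z))"
    and "(LINT z:{0<..} \<times> {0<..}|lborel. complex_of_real (g z)) = complex_of_real (LINT z:offdiag|lborel. g z)"
proof -
  have eq: "(\<lambda>z. indicator ({0<..} \<times> {0<..}) z *\<^sub>R complex_of_real (g z)) =
      (\<lambda>z. complex_of_real (indicator offdiag z *\<^sub>R g z))"
    using assms by (auto simp: fun_eq_iff indicator_def offdiag_def)
  show "set_integrable lborel offdiag g \<Longrightarrow> set_integrable lborel ({0<..} \<times> {0<..}) (\<lambda>z. complex_of_real (g z))"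
    unfolding set_integrable_def eq by (rule integrable_of_real)
  show "(LINT z:{0<..} \<times> {0<..}|lborel. complex_of_real (g z)) = complex_of_real (LINT z:offdiag|lborel. g z)"
    unfolding set_lebesgue_integral_def eq by (rule integral_complex_of_real)
qed

lemma
  assumes "0 < s"
  shows set_integrable_Eform_integrand_haar:
      "set_integrable lborel ({0<..} \<times> {0<..}) (Eform_integrand s (haar i k) (haar i' k'))"
    and Eform_haar:
      "Eform s (haar i k) (haar i' k') =
        complex_of_real (if (i, k) = (i', k') then 2 powr (2 * s * real_of_int i) * gamma2 s else 0)"
proof -
  have diag: "haar_incr_prod i k i' k' (x, x) * kernel_E s (ddist x x) = 0" if "0 < x" for x
    using that by (simp add: ddist_self kernel_E_def)
  show "set_integrable lborel ({0<..} \<times> {0<..}) (Eform_integrand s (haar i k) (haar i' k'))"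
    unfolding Eform_integrand_haar[abs_def]
    by (rule set_integral_quadrant_eq_offdiag(1)[OF _ set_integrable_offdiag_haar_incr_prod[OF assms]]) (simp add: diag)
  show "Eform s (haar i k) (haar i' k') =
      complex_of_real (if (i, k) = (i', k') then 2 powr (2 * s * real_of_int i) * gamma2 s else 0)"
  proof -
    have "Eform s (haar i k) (haar i' k') = complex_of_real
        (LINT z:offdiag|lborel. haar_incr_prod i k i' k' z * kernel_E s (ddist (fst z) (snd z)))"
      unfolding Eform_eq_integrand Eform_integrand_haar by (rule set_integral_quadrant_eq_offdiag(2)) (simp add: diag)
    then show ?thesis unfolding set_integral_offdiag_haar_incr_prod[OF assms] .
  qed
qed

lemma
  assumes "0 < s"
  shows set_integrable_Qform_integrand_haar:
      "set_integrable lborel ({0<..} \<times> {0<..}) (Qform_integrand s (haar i k) (haar i' k'))"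
    and Qform_haar:
      "Qform s (haar i k) (haar i' k') =
        complex_of_real (if (i, k) = (i', k') then 2 powr (- 2 * s * real_of_int i) * gamma1 s else 0)"
proof -
  have diag: "haar_tensor i k i' k' (x, x) * kernel_Q s (ddist x x) = 0" if "0 < x" for x
    using that by (simp add: ddist_self kernel_Q_def)
  show "set_integrable lborel ({0<..} \<times> {0<..}) (Qform_integrand s (haar i k) (haar i' k'))"
    unfolding Qform_integrand_haar[abs_def]
    by (rule set_integral_quadrant_eq_offdiag(1)[OF _ set_integrable_offdiag_haar_tensor[OF assms]]) (simp add: diag)
  show "Qform s (haar i k) (haar i' k') =
      complex_of_real (if (i, k) = (i', k') then 2 powr (- 2 * s * real_of_int i) * gamma1 s else 0)"
  proof -
    have "Qform s (haar i k) (haar i' k') = complex_of_real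
        (LINT z:offdiag|lborel. haar_tensor i k i' k' z * kernel_Q s (ddist (fst z) (snd z)))"
      unfolding Qform_eq_integrand Qform_integrand_haar by (rule set_integral_quadrant_eq_offdiag(2)) (simp add: diag)
    then show ?thesis unfolding set_integral_offdiag_haar_tensor[OF assms] .
  qed
qed

lemma Eform_integrand_sum:
  "Eform_integrand s (\<lambda>x. \<Sum>a\<in>F. c a * f a x) (\<lambda>x. \<Sum>a\<in>F. c a * f a x) z =
    (\<Sum>(a, b)\<in>F \<times> F. (c a * cnj (c b)) * Eform_integrand s (f a) (f b) z)"
proof -
  define P where "P = complex_of_real (ddist (fst z) (snd z) powr (2 * s))"
  define R where "R = complex_of_real (ddist (fst z) (snd z))"
  have diff: "(\<Sum>a\<in>F. c a * f a x) - (\<Sum>a\<in>F. c a * f a y) = (\<Sum>a\<in>F. c a * (f a x - f a y))"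
    for x y by (simp add: sum_subtractf[symmetric] right_diff_distrib)
  have cnj_diff: "cnj (\<Sum>a\<in>F. c a * f a x) - cnj (\<Sum>a\<in>F. c a * f a y) =
      (\<Sum>a\<in>F. cnj (c a) * (cnj (f a x) - cnj (f a y)))" for x y
    by (simp add: sum_subtractf[symmetric] right_diff_distrib)
  have "Eform_integrand s (\<lambda>x. \<Sum>a\<in>F. c a * f a x) (\<lambda>x. \<Sum>a\<in>F. c a * f a x) z =
      (\<Sum>a\<in>F. c a * (f a (fst z) - f a (snd z))) * (\<Sum>b\<in>F. cnj (c b) * (cnj (f b (fst z)) - cnj (f b (snd z)))) / P / R"
    unfolding Eform_integrand_def P_def R_def diff cnj_diff ..
  also have "\<dots> = (\<Sum>a\<in>F. \<Sum>b\<in>F. (c a * (f a (fst z) - f a (snd z))) *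
      (cnj (c b) * (cnj (f b (fst z)) - cnj (f b (snd z)))) / P / R)"
    unfolding sum_product sum_divide_distrib ..
  also have "\<dots> = (\<Sum>(a, b)\<in>F \<times> F. (c a * cnj (c b)) * Eform_integrand s (f a) (f b) z)"
    unfolding sum.cartesian_product Eform_integrand_def P_def[symmetric] R_def[symmetric]
    by (intro sum.cong refl) (auto simp: algebra_simps)
  finally show ?thesis .
qed

lemma Qform_integrand_sum:
  "Qform_integrand s (\<lambda>x. \<Sum>a\<in>F. c a * f a x) (\<lambda>x. \<Sum>a\<in>F. c a * f a x) z =
    (\<Sum>(a, b)\<in>F \<times> F. (c a * cnj (c b)) * Qform_integrand s (f a) (f b) z)"
proof -
  define P where "P = complex_of_real (ddist (fst z) (snd z) powr (2 * s))"
  define R where "R = complex_of_real (ddist (fst z) (snd z))"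
  have "Qform_integrand s (\<lambda>x. \<Sum>a\<in>F. c a * f a x) (\<lambda>x. \<Sum>a\<in>F. c a * f a x) z =
      (\<Sum>a\<in>F. \<Sum>b\<in>F. P * ((c a * f a (fst z)) * (cnj (c b) * cnj (f b (snd z)))) / R)"
    unfolding Qform_integrand_def P_def[symmetric] R_def[symmetric] mult.assoc cnj_sum sum_product
    by (simp add: sum_distrib_left sum_divide_distrib)
  also have "\<dots> = (\<Sum>(a, b)\<in>F \<times> F. (c a * cnj (c b)) * Qform_integrand s (f a) (f b) z)"
    unfolding sum.cartesian_product Qform_integrand_def P_def[symmetric] R_def[symmetric]
    by (intro sum.cong refl) (auto simp: algebra_simps)
  finally show ?thesis .
qed

lemma set_integral_sum:
  fixes g :: "'a \<Rightarrow> 'b \<Rightarrow> 'c::{banach, second_countable_topology}"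
  assumes "finite F" "\<And>a. a \<in> F \<Longrightarrow> set_integrable M X (g a)"
  shows "(LINT z:X|M. (\<Sum>a\<in>F. g a z)) = (\<Sum>a\<in>F. LINT z:X|M. g a z)"
  unfolding set_lebesgue_integral_def scaleR_sum_right
  using assms by (intro Bochner_Integration.integral_sum) (auto simp: set_integrable_def)

lemma set_integral_diagonal_form:
  fixes B :: "(real \<Rightarrow> complex) \<Rightarrow> (real \<Rightarrow> complex) \<Rightarrow> real \<times> real \<Rightarrow> complex"
    and f :: "'a \<Rightarrow> real \<Rightarrow> complex"
  assumes fin: "finite F"
    and expand: "\<And>z. B (\<lambda>x. \<Sum>a\<in>F. c a * f a x) (\<lambda>x. \<Sum>a\<in>F. c a * f a x) z =
      (\<Sum>(a, b)\<in>F \<times> F. (c a * cnj (c b)) * B (f a) (f b) z)"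
    and int: "\<And>a b. set_integrable lborel X (B (f a) (f b))"
    and diag: "\<And>a b. (LINT z:X|lborel. B (f a) (f b) z) = complex_of_real (if a = b then w a else 0)"
  shows "(LINT z:X|lborel. B (\<lambda>x. \<Sum>a\<in>F. c a * f a x) (\<lambda>x. \<Sum>a\<in>F. c a * f a x) z) =
    complex_of_real (\<Sum>a\<in>F. (cmod (c a))\<^sup>2 * w a)"
proof -
  have "(LINT z:X|lborel. B (\<lambda>x. \<Sum>a\<in>F. c a * f a x) (\<lambda>x. \<Sum>a\<in>F. c a * f a x) z) =
      (\<Sum>p\<in>F \<times> F. LINT z:X|lborel. (case p of (a, b) \<Rightarrow> (c a * cnj (c b)) * B (f a) (f b) z))"
    unfolding expand using fin int by (intro set_integral_sum) auto
  also have "\<dots> = (\<Sum>(a, b)\<in>F \<times> F. if b = a then (c a * cnj (c a)) * complex_of_real (w a) else 0)"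
    by (intro sum.cong refl) (auto simp: diag)
  also have "\<dots> = (\<Sum>a\<in>F. \<Sum>b\<in>F. if b = a then (c a * cnj (c a)) * complex_of_real (w a) else 0)"
    by (simp only: sum.cartesian_product)
  also have "\<dots> = (\<Sum>a\<in>F. (c a * cnj (c a)) * complex_of_real (w a))"
    using fin by simp
  also have "\<dots> = complex_of_real (\<Sum>a\<in>F. (cmod (c a))\<^sup>2 * w a)"
    by (simp add: complex_mult_cnj cmod_power2)
  finally show ?thesis .
qed

lemma integrable_haar_real_mult: "integrable lborel (\<lambda>x. haar_real i k x * haar_real i' k' x)"
proof (rule Bochner_Integration.integrable_bound)
  let ?C = "2 powr (real_of_int i / 2) * 2 powr (real_of_int i' / 2)"
  have "integrable lborel (indicator (dyad i k \<inter> dyad i k) :: real \<Rightarrow> real)"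
    by (rule integrable_indicator_dyad_Int)
  then show "integrable lborel (\<lambda>x. ?C * indicator (dyad i k) x)" by simp
  show "AE x in lborel. norm (haar_real i k x * haar_real i' k' x) \<le> norm (?C * indicator (dyad i k) x)"
    using abs_haar_real_mult_le[of i k _ i' k'] haar_real_nonzero[of i k]
    by (intro AE_I2) (fastforce simp: indicator_def)
qed simp

lemma ipR_haar: "ipR (haar i k) (haar i' k') = (if (i, k) = (i', k') then 1 else 0)"
proof -
  have eq: "(\<lambda>x. indicator {0<..} x *\<^sub>R (haar i k x * cnj (haar i' k' x))) =
      (\<lambda>x. complex_of_real (haar_real i k x * haar_real i' k' x))"
    using haar_real_nonzero_pos[of i k] by (force simp: fun_eq_iff indicator_def haar_eq_haar_real)
  show ?thesis
    unfolding ipR_def set_lebesgue_integral_def eq integral_complex_of_real haar_real_orthonormal by simp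
qed

lemma ipR_sum_haar:
  assumes "finite F"
  shows "ipR (\<lambda>x. \<Sum>a\<in>F. c a * case_prod haar a x) (haar j k) = (if (j, k) \<in> F then c (j, k) else 0)"
proof -
  have int: "set_integrable lborel {0<..} (\<lambda>x. c a * (case_prod haar a x * cnj (haar j k x)))" for a
  proof -
    have "(\<lambda>x. indicator {0<..} x *\<^sub>R (case_prod haar a x * cnj (haar j k x))) =
        (\<lambda>x. complex_of_real (indicator {0<..} x *\<^sub>R (haar_real (fst a) (snd a) x * haar_real j k x)))"
      by (auto simp: fun_eq_iff haar_eq_haar_real case_prod_beta scaleR_conv_of_real)
    then have "set_integrable lborel {0<..} (\<lambda>x. case_prod haar a x * cnj (haar j k x))"
      unfolding set_integrable_def
      by (simp only:) (intro integrable_of_real integrable_mult_indicator integrable_haar_real_mult; simp)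
    then show ?thesis by (intro set_integrable_mult_right)
  qed
  have "ipR (\<lambda>x. \<Sum>a\<in>F. c a * case_prod haar a x) (haar j k) = (\<Sum>a\<in>F. c a * ipR (case_prod haar a) (haar j k))"
    unfolding ipR_def sum_distrib_right mult.assoc
    using set_integral_sum[OF assms int] by simp
  also have "\<dots> = (\<Sum>a\<in>F. if a = (j, k) then c a else 0)"
    by (intro sum.cong refl) (simp add: ipR_haar case_prod_beta prod_eq_iff)
  also have "\<dots> = (if (j, k) \<in> F then c (j, k) else 0)"
    using assms by (rule sum.delta)
  finally show ?thesis .
qed

lemma infsum_finite_coefficients:
  assumes "finite F" "\<And>j k. ip j k = (if (j, k) \<in> F then c (j, k) else 0)" "\<And>j. g j 0 = (0::real)"
  shows "(\<Sum>\<^sub>\<infinity>(j,k)\<in>(UNIV :: (int \<times> nat) set). g j ((cmod (ip j k))\<^sup>2)) = (\<Sum>a\<in>F. g (fst a) ((cmod (c a))\<^sup>2))"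
proof -
  have "(\<Sum>\<^sub>\<infinity>(j,k)\<in>(UNIV :: (int \<times> nat) set). g j ((cmod (ip j k))\<^sup>2)) = (\<Sum>\<^sub>\<infinity>a\<in>F. g (fst a) ((cmod (c a))\<^sup>2))"
    by (rule infsum_cong_neutral) (use assms(2,3) in auto)
  then show ?thesis using assms(1) by simp
qed

lemma dlen_powr: "dlen j powr (2 * s) = 2 powr (- 2 * s * real_of_int j)"
  unfolding dlen_def powr_powr by (simp add: algebra_simps)

lemma SH_obtain:
  assumes "\<phi> \<in> SH"
  obtains F c where "finite F" "\<phi> = (\<lambda>x. \<Sum>a\<in>F. c a * case_prod haar a x)"
  using assms unfolding SH_def by (auto simp: case_prod_beta)

lemma Eform_SH:
  assumes "0 < s" "\<phi> \<in> SH"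
  shows "Eform s \<phi> \<phi> = complex_of_real (gamma2 s *
    (\<Sum>\<^sub>\<infinity>(j,k)\<in>(UNIV :: (int \<times> nat) set). (cmod (ipR \<phi> (haar j k)))\<^sup>2 / dlen j powr (2 * s)))"
proof -
  obtain F c where fin: "finite F" and \<phi>: "\<phi> = (\<lambda>x. \<Sum>a\<in>F. c a * case_prod haar a x)"
    using assms(2) by (rule SH_obtain)
  have "Eform s \<phi> \<phi> = complex_of_real (\<Sum>a\<in>F. (cmod (c a))\<^sup>2 * (2 powr (2 * s * real_of_int (fst a)) * gamma2 s))"
    unfolding \<phi> Eform_eq_integrand
    by (rule set_integral_diagonal_form[where B = "Eform_integrand s" and f = "case_prod haar",
          OF fin Eform_integrand_sum])
      (auto simp: set_integrable_Eform_integrand_haar[OF assms(1)] Eform_eq_integrand[symmetric]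
        Eform_haar[OF assms(1)] case_prod_beta prod_eq_iff)
  also have "\<dots> = complex_of_real (gamma2 s * (\<Sum>a\<in>F. (cmod (c a))\<^sup>2 / dlen (fst a) powr (2 * s)))"
    unfolding sum_distrib_left dlen_powr
    by (intro arg_cong[where f = complex_of_real] sum.cong refl) (simp add: powr_minus divide_inverse)
  also have "(\<Sum>a\<in>F. (cmod (c a))\<^sup>2 / dlen (fst a) powr (2 * s)) =
      (\<Sum>\<^sub>\<infinity>(j,k)\<in>(UNIV :: (int \<times> nat) set). (cmod (ipR \<phi> (haar j k)))\<^sup>2 / dlen j powr (2 * s))"
    unfolding \<phi> by (rule infsum_finite_coefficients[OF fin ipR_sum_haar[OF fin], symmetric]) simp
  finally show ?thesis .
qed

lemma Qform_SH:
  assumes "0 < s" "\<phi> \<in> SH"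
  shows "Qform s \<phi> \<phi> = complex_of_real (gamma1 s *
    (\<Sum>\<^sub>\<infinity>(j,k)\<in>(UNIV :: (int \<times> nat) set). dlen j powr (2 * s) * (cmod (ipR \<phi> (haar j k)))\<^sup>2))"
proof -
  obtain F c where fin: "finite F" and \<phi>: "\<phi> = (\<lambda>x. \<Sum>a\<in>F. c a * case_prod haar a x)"
    using assms(2) by (rule SH_obtain)
  have "Qform s \<phi> \<phi> = complex_of_real (\<Sum>a\<in>F. (cmod (c a))\<^sup>2 * (2 powr (- 2 * s * real_of_int (fst a)) * gamma1 s))"
    unfolding \<phi> Qform_eq_integrand
    by (rule set_integral_diagonal_form[where B = "Qform_integrand s" and f = "case_prod haar",
          OF fin Qform_integrand_sum])
      (auto simp: set_integrable_Qform_integrand_haar[OF assms(1)] Qform_eq_integrand[symmetric]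
        Qform_haar[OF assms(1)] case_prod_beta prod_eq_iff)
  also have "\<dots> = complex_of_real (gamma1 s * (\<Sum>a\<in>F. dlen (fst a) powr (2 * s) * (cmod (c a))\<^sup>2))"
    unfolding sum_distrib_left dlen_powr by (simp add: mult_ac)
  also have "(\<Sum>a\<in>F. dlen (fst a) powr (2 * s) * (cmod (c a))\<^sup>2) =
      (\<Sum>\<^sub>\<infinity>(j,k)\<in>(UNIV :: (int \<times> nat) set). dlen j powr (2 * s) * (cmod (ipR \<phi> (haar j k)))\<^sup>2)"
    unfolding \<phi> by (rule infsum_finite_coefficients[OF fin ipR_sum_haar[OF fin], symmetric]) simp
  finally show ?thesis .
qed

theorem lemma2p6:
  fixes s :: real
  assumes "0 < s" and "s < 1/2"
  shows "(\<forall>j k j' k'. (j, k) \<noteq> (j', k') \<longrightarrow> Eform s (haar j k) (haar j' k') = 0)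
       \<and> (\<forall>j k j' k'. (j, k) \<noteq> (j', k') \<longrightarrow> Qform s (haar j k) (haar j' k') = 0)
       \<and> (\<forall>\<phi>\<in>SH. Eform s \<phi> \<phi> = complex_of_real (gamma2 s *
            (\<Sum>\<^sub>\<infinity>(j,k)\<in>(UNIV :: (int \<times> nat) set). (cmod (ipR \<phi> (haar j k)))\<^sup>2 / dlen j powr (2 * s))))
       \<and> (\<forall>\<phi>\<in>SH. Qform s \<phi> \<phi> = complex_of_real (gamma1 s *
            (\<Sum>\<^sub>\<infinity>(j,k)\<in>(UNIV :: (int \<times> nat) set). dlen j powr (2 * s) * (cmod (ipR \<phi> (haar j k)))\<^sup>2)))"
  using Eform_haar[OF assms(1)] Qform_haar[OF assms(1)] Eform_SH[OF assms(1)] Qform_SH[OF assms(1)]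
  by simp

end
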